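(* Consider problem (P) with $\mathcal{X}_i=\mathbb{R}^{d_i}$ for all $i$, under Assumption 1, let $\mathcal{G}$ be undirected and connected, suppose $A=[A_1,\dots,A_n]$ has full row rank, and that each $f_i$ is $\mu_i$-strongly convex and $l_i$-smooth. Let $\mu=\min_i\mu_i$, $l=\max_i l_i$, and let $\beta>0$, $\varphi>0$, $\alpha$ satisfy $$\varphi>\max\Big\{\tfrac{l}{2}-1,\;2\bar\sigma^2(\mathbf{A})\Big\},\qquad \alpha>\max\Big\{1,\;\frac{\frac{\varphi\bar\sigma^2(\mathbf{A})}{\mu}+\frac l2}{\varphi+1-\frac l2}\Big\}.$$ Then for any initial point $(\mathbf{x}(0),\boldsymbol\lambda(0),\mathbf{z}(0))\in\mathbb{R}^d\times\mathbb{R}^{np}\times\mathbb{R}^{np}$ with $\sum_{i=1}^n z_i(0)=0$, the trajectory $(\mathbf{x}(t),\boldsymbol\lambda(t),\mathbf{z}(t))$ of IDEA converges exponentially to a point $(\mathbf{x}^*,\boldsymbol\lambda^*,\mathbf{z}^* )$, where $\mathbf{x}^*$ is the unique optimal solution of (P).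
   Context: Problem (P): for $i=1,\dots,n$ let $f_i:\mathbb{R}^{d_i}\to\mathbb{R}$, $\mathcal{X}_i\subseteq\mathbb{R}^{d_i}$, $A_i\in\mathbb{R}^{p\times d_i}$, $b\in\mathbb{R}^p$; $d=\sum_i d_i$, $\mathbf{x}=[x_1^\top,\dots,x_n^\top]^\top$, $f(\mathbf{x})=\sum_i f_i(x_i)$, $A=[A_1,\dots,A_n]$, $\mathcal{X}=\prod_i\mathcal{X}_i$; (P) is $\min f(\mathbf{x})$ s.t. $A\mathbf{x}=b$, $\mathbf{x}\in\mathcal{X}$, assumed to have at least one optimal solution. Assumption 1: each $\mathcal{X}_i$ is closed and convex, $f_i$ is convex on $\mathcal{X}_i$ and differentiable on an open set containing $\mathcal{X}_i$ with $\nabla f_i$ locally Lipschitz there, and Slater's condition holds (some relative interior point of $\mathcal{X}$ satisfies $A\mathbf{x}=b$). $l_i$-smooth means $\nabla f_i$ is $l_i$-Lipschitz. Graph: weighted graph on $\{1,\dots,n\}$ with adjacency matrix $[a_{ij}]$ ($a_{ij}>0$ if agent $i$ receives from agent $j$, else $0$); Laplacian $L=D^{out}-[a_{ij}]$, $D^{out}=\mathrm{diag}(\sum_j a_{ij})_i$. Undirected means $a_{ij}=a_{ji}$. IDEA: choose $b_1,\dots,b_n\in\mathbb{R}^p$ with $\sum_i b_i=b$; $\mathbf{A}=\mathrm{diag}(A_1,\dots,A_n)\in\mathbb{R}^{np\times d}$, $\mathbf{b}=[b_1^\top,\dots,b_n^\top]^\top$, $\mathbf{L}=L\otimes I_p$,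 $\nabla f(\mathbf{x})=[\nabla f_1(x_1)^\top,\dots,\nabla f_n(x_n)^\top]^\top$, $\boldsymbol\lambda$, $\mathbf{z}=[z_1^\top,\dots,z_n^\top]^\top\in\mathbb{R}^{np}$. IDEA is $\dot{\mathbf{x}}=-\alpha(\nabla f(\mathbf{x})+\mathbf{A}^\top\boldsymbol\lambda)-\mathbf{A}^\top(\mathbf{A}\mathbf{x}-\mathbf{b}-\mathbf{z})$, $\dot{\boldsymbol\lambda}=\mathbf{A}\mathbf{x}-\mathbf{b}-\mathbf{z}-\beta\mathbf{L}\boldsymbol\lambda$, $\dot{\mathbf{z}}=\alpha\beta\mathbf{L}\boldsymbol\lambda$. $\bar\sigma(\mathbf{A})$ is the largest singular value of $\mathbf{A}$. Exponential convergence means $\|(\mathbf{x},\boldsymbol\lambda,\mathbf{z})(t)-(\mathbf{x}^*,\boldsymbol\lambda^*,\mathbf{z}^* )\|\le Ce^{-ct}$ for some $C,c>0$. *)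

theory Defs
  imports "HOL-Analysis.Analysis"
begin

text \<open>Block structure: the stacked decision vector lives in real^'d; the coordinate
  k belongs to agent blk k.  Agents are indexed by the finite type 'n, the
  constraint space is real^'p.  The matrix A = [A_1,...,A_n] is a p x d matrix
  whose column k is a column of A_(blk k).\<close>

definition block_proj :: "('d \<Rightarrow> 'n) \<Rightarrow> 'n \<Rightarrow> real^'d \<Rightarrow> real^'d" where
  "block_proj blk i x = (\<chi> k. if blk k = i then x$k else 0)"

definition depends_only_on_block :: "('d \<Rightarrow> 'n) \<Rightarrow> 'n \<Rightarrow> (real^'d \<Rightarrow> real) \<Rightarrow> bool" where
  "depends_only_on_block blk i g \<longleftrightarrow> (\<forall>x y. block_proj blk i x = block_proj blk i y \<longrightarrow> g x = g y)"

definition strongly_convex_block :: "('d \<Rightarrow> 'n) \<Rightarrow> 'n \<Rightarrow> real \<Rightarrow> (real^'d \<Rightarrow> real) \<Rightarrow> bool" where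
  "strongly_convex_block blk i mu g \<longleftrightarrow>
     convex_on UNIV (\<lambda>x. g x - mu / 2 * (norm (block_proj blk i x))\<^sup>2)"

text \<open>Block diagonal matrix bold-A = diag(A_1,...,A_n) applied to x: agent i gets A_i x_i.\<close>
definition bigA :: "real^'d^'p \<Rightarrow> ('d \<Rightarrow> 'n) \<Rightarrow> real^'d \<Rightarrow> real^'p^'n" where
  "bigA A blk x = (\<chi> i. \<chi> j. \<Sum>k\<in>{k. blk k = i}. A$j$k * x$k)"

definition bigAT :: "real^'d^'p \<Rightarrow> ('d \<Rightarrow> 'n) \<Rightarrow> real^'p^'n \<Rightarrow> real^'d" where
  "bigAT A blk v = (\<chi> k. \<Sum>j\<in>UNIV. A$j$k * v$(blk k)$j)"

definition lapl :: "('n \<Rightarrow> 'n \<Rightarrow> real) \<Rightarrow> real^'p^'n \<Rightarrow> real^'p^'n" where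
  "lapl a v = (\<chi> i. \<Sum>j\<in>UNIV. a i j *\<^sub>R (v$i - v$j))"

definition undirected_graph :: "('n \<Rightarrow> 'n \<Rightarrow> real) \<Rightarrow> bool" where
  "undirected_graph a \<longleftrightarrow> (\<forall>i j. a i j \<ge> 0 \<and> a i j = a j i)"

definition graph_connected :: "('n \<Rightarrow> 'n \<Rightarrow> real) \<Rightarrow> bool" where
  "graph_connected a \<longleftrightarrow> (\<forall>i j. (i, j) \<in> {(i, j). a i j > 0}\<^sup>*)"

text \<open>Largest singular value of bold-A = its spectral (operator 2-) norm.\<close>
definition sigma_max :: "real^'d^'p \<Rightarrow> ('d \<Rightarrow> 'n::finite) \<Rightarrow> real" where
  "sigma_max A blk = onorm (bigA A blk)"

end

theory Submission
  imports Defs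
begin

(* Let xs be the optimum, c a Lagrange multiplier (A^T c = - grad f xs), ls = (c, ..., c) and
   zs = bold-A xs - bold-b.  The error e = (x - xs, lam - ls, z - zs) obeys the IDEA equations
   with grad f x replaced by g = grad f x - grad f xs, which is strongly monotone and Lipschitz
   in the x-error.  Since sum_i z_i is conserved and sum_i zs_i = 0, the z-error stays among the
   zero-sum vectors, on which bold-L has a symmetric positive semidefinite inverse K.  For small
   weights d, eps > 0 the function
     V = |e_x|^2 / 2 + (1 - d) / (2 alpha) |alpha e_lam + e_z|^2 + d alpha / 2 |e_lam|^2
         + <K e_z, e_z> / (2 beta) + eps <bold-A e_x, e_lam>
   is equivalent to |e|^2 and satisfies V' <= - r V: the combination alpha e_lam + e_z does not see
   bold-L, the K-term cancels the remaining cross term <e_lam, e_z>, and the eps-term makes e_lam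
   decay, because connectivity and full row rank of A give
   kappa |w|^2 <= |bold-A^T w|^2 + <w, bold-L w>. *)

section \<open>Scalar inequalities\<close>

lemma product_le_weighted_squares:
  fixes x y c :: real
  assumes "0 < c"
  shows "x * y \<le> c / 2 * x\<^sup>2 + y\<^sup>2 / (2 * c)"
proof -
  have "0 \<le> (c * x - y)\<^sup>2 / (2 * c)"
    using assms by simp
  also have "\<dots> = c / 2 * x\<^sup>2 + y\<^sup>2 / (2 * c) - x * y"
    using assms by (simp add: power2_eq_square field_simps)
  finally show ?thesis
    by simp
qed

lemma mult_le_sum_squares:
  fixes x y :: real
  shows "x * y \<le> x\<^sup>2 + y\<^sup>2"
proof -
  have "x * y \<le> (x\<^sup>2 + y\<^sup>2) / 2"
    using sum_squares_bound[of x y] by simp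
  also have "\<dots> \<le> x\<^sup>2 + y\<^sup>2"
    by simp
  finally show ?thesis .
qed

lemma dissipation_quadratic_le:
  fixes d u w Z :: real
  assumes "0 < d" "d \<le> 1/2" "w \<le> u * Z" "0 \<le> u" "0 \<le> Z"
  shows "(2 - d) * w - u\<^sup>2 - (1 - d) * Z\<^sup>2 \<le> d * u\<^sup>2 - d / 4 * Z\<^sup>2"
proof -
  have "4 * (1 + d) * ((1 + d) * u\<^sup>2 - (2 - d) * u * Z + (1 - 5 * d / 4) * Z\<^sup>2)
      = (2 * (1 + d) * u - (2 - d) * Z)\<^sup>2 + 3 * (d * (1 - 2 * d) * Z\<^sup>2)"
    by (simp add: power2_eq_square algebra_simps)
  moreover have "0 \<le> d * (1 - 2 * d) * Z\<^sup>2"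
    using assms by simp
  ultimately have "0 \<le> 4 * (1 + d) * ((1 + d) * u\<^sup>2 - (2 - d) * u * Z + (1 - 5 * d / 4) * Z\<^sup>2)"
    using zero_le_power2[of "2 * (1 + d) * u - (2 - d) * Z"] by linarith
  then have "0 \<le> (1 + d) * u\<^sup>2 - (2 - d) * u * Z + (1 - 5 * d / 4) * Z\<^sup>2"
    using assms by (simp add: zero_le_mult_iff)
  moreover have "(2 - d) * w \<le> (2 - d) * (u * Z)"
    using assms by (intro mult_left_mono) auto
  ultimately show ?thesis
    by (simp add: algebra_simps)
qed

lemma cross_rate_scalar_le:
  fixes T \<alpha> lg sB C q X Z La :: real
  assumes "0 < \<alpha>" "0 \<le> lg" "0 < sB" "0 \<le> q" "0 \<le> X" "0 \<le> Z"
    and T: "T \<le> - \<alpha> * q\<^sup>2 + \<alpha> * q * lg * X + q * sB * (sB * X + Z) + sB\<^sup>2 * X\<^sup>2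
      + sB * X * Z + C * X * La"
  shows "T \<le> - \<alpha> / 2 * q\<^sup>2 + ((\<alpha> * lg + sB\<^sup>2 + sB)\<^sup>2 / \<alpha> + sB\<^sup>2 + sB) * (X\<^sup>2 + Z\<^sup>2)
    + C * X * La"
proof -
  define R where "R = \<alpha> * lg + sB\<^sup>2 + sB"
  have "q * (\<alpha> * lg * X + sB * (sB * X + Z)) \<le> q * (R * (X + Z))"
    using assms
    by (intro mult_left_mono) (simp_all add: R_def algebra_simps power2_eq_square mult_nonneg_nonneg)
  then have "\<alpha> * q * lg * X + q * sB * (sB * X + Z) \<le> q * (R * (X + Z))"
    by (simp add: algebra_simps)
  moreover have "q * (R * (X + Z)) \<le> \<alpha> / 2 * q\<^sup>2 + (R * (X + Z))\<^sup>2 / (2 * \<alpha>)"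
    using product_le_weighted_squares[OF \<open>0 < \<alpha>\<close>] .
  moreover have "(R * (X + Z))\<^sup>2 / (2 * \<alpha>) \<le> R\<^sup>2 / \<alpha> * (X\<^sup>2 + Z\<^sup>2)"
  proof -
    have "(X + Z)\<^sup>2 \<le> 2 * (X\<^sup>2 + Z\<^sup>2)"
      using sum_squares_bound[of X Z] by (simp add: power2_sum)
    then have "(R * (X + Z))\<^sup>2 \<le> R\<^sup>2 * (2 * (X\<^sup>2 + Z\<^sup>2))"
      unfolding power_mult_distrib by (rule mult_left_mono) simp
    then have "(R * (X + Z))\<^sup>2 / (2 * \<alpha>) \<le> R\<^sup>2 * (2 * (X\<^sup>2 + Z\<^sup>2)) / (2 * \<alpha>)"
      using \<open>0 < \<alpha>\<close> by (intro divide_right_mono) auto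
    also have "\<dots> = R\<^sup>2 / \<alpha> * (X\<^sup>2 + Z\<^sup>2)"
      using \<open>0 < \<alpha>\<close> by (simp add: field_simps)
    finally show ?thesis .
  qed
  moreover have "sB * X * Z \<le> sB * (X\<^sup>2 + Z\<^sup>2)"
    using mult_left_mono[OF mult_le_sum_squares[of X Z], of sB] \<open>0 < sB\<close> by (simp add: mult.assoc)
  moreover have "sB\<^sup>2 * X\<^sup>2 \<le> sB\<^sup>2 * (X\<^sup>2 + Z\<^sup>2)"
    by (intro mult_left_mono) auto
  ultimately have "T \<le> - \<alpha> * q\<^sup>2 + (\<alpha> / 2 * q\<^sup>2 + R\<^sup>2 / \<alpha> * (X\<^sup>2 + Z\<^sup>2)) + sB\<^sup>2 * (X\<^sup>2 + Z\<^sup>2)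
      + sB * (X\<^sup>2 + Z\<^sup>2) + C * X * La"
    using T by linarith
  also have "\<dots> = - \<alpha> / 2 * q\<^sup>2 + (R\<^sup>2 / \<alpha> + sB\<^sup>2 + sB) * (X\<^sup>2 + Z\<^sup>2) + C * X * La"
    by (simp add: algebra_simps)
  finally show ?thesis
    unfolding R_def .
qed

lemma lyapunov_rate_scalar_le:
  fixes W T \<alpha> \<beta> \<mu> \<kappa> d \<epsilon> C1 C2 X Z La q P :: real
  assumes "0 < \<alpha>" "0 < \<kappa>" "0 < \<epsilon>" "0 \<le> P"
    and W: "W \<le> - \<alpha> * \<mu> / 2 * X\<^sup>2 - d / 4 * Z\<^sup>2 - d * \<alpha> * \<beta> * P + \<epsilon> * T"
    and T: "T \<le> - \<alpha> / 2 * q\<^sup>2 + C1 * (X\<^sup>2 + Z\<^sup>2) + C2 * X * La"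
    and coercive: "\<kappa> * La\<^sup>2 \<le> q\<^sup>2 + P"
    and small: "\<epsilon> \<le> 2 * d * \<beta>" "\<epsilon> * (C1 + C2\<^sup>2 / (\<alpha> * \<kappa>)) \<le> \<alpha> * \<mu> / 4"
      "\<epsilon> * C1 \<le> d / 8"
  shows "W \<le> - \<alpha> * \<mu> / 4 * X\<^sup>2 - d / 8 * Z\<^sup>2 - \<epsilon> * \<alpha> * \<kappa> / 4 * La\<^sup>2"
proof -
  have "C2 * X * La \<le> \<alpha> * \<kappa> / 4 * La\<^sup>2 + C2\<^sup>2 / (\<alpha> * \<kappa>) * X\<^sup>2"
    using product_le_weighted_squares[of "\<alpha> * \<kappa> / 2" La "C2 * X"] assms
    by (simp add: power_mult_distrib field_simps)
  with T have "\<epsilon> * T \<le> \<epsilon> * (- \<alpha> / 2 * q\<^sup>2 + C1 * (X\<^sup>2 + Z\<^sup>2)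
      + \<alpha> * \<kappa> / 4 * La\<^sup>2 + C2\<^sup>2 / (\<alpha> * \<kappa>) * X\<^sup>2)"
    using \<open>0 < \<epsilon>\<close> by (intro mult_left_mono) auto
  moreover have "\<epsilon> * \<alpha> / 2 * (\<kappa> * La\<^sup>2) \<le> \<epsilon> * \<alpha> / 2 * (q\<^sup>2 + P)"
    using coercive assms by (intro mult_left_mono) auto
  moreover have "\<epsilon> * \<alpha> / 2 * P \<le> d * \<alpha> * \<beta> * P"
    using small(1) assms by (intro mult_right_mono) (auto simp: field_simps)
  moreover have "\<epsilon> * (C1 + C2\<^sup>2 / (\<alpha> * \<kappa>)) * X\<^sup>2 \<le> \<alpha> * \<mu> / 4 * X\<^sup>2"
    using small(2) by (intro mult_right_mono) auto
  moreover have "\<epsilon> * C1 * Z\<^sup>2 \<le> d / 8 * Z\<^sup>2"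
    using small(3) by (intro mult_right_mono) auto
  ultimately show ?thesis
    using W by (simp add: algebra_simps)
qed

lemma lyapunov_lower_scalar:
  fixes X La Z W P y \<alpha> \<beta> d \<epsilon> sB :: real
  assumes "0 < \<alpha>" "0 < \<beta>" "0 < d" "d \<le> 1/2" "0 < \<epsilon>" "0 \<le> sB" "0 \<le> P" "0 \<le> Z"
    and y: "\<bar>y\<bar> \<le> sB * X * La" and Z: "Z \<le> W + \<alpha> * La"
    and small: "\<epsilon> * sB \<le> 1/2" "\<epsilon> * sB \<le> d * \<alpha> / 2"
  shows "X\<^sup>2 / 4 + d * \<alpha> / 8 * La\<^sup>2 + d / (16 * \<alpha>) * Z\<^sup>2
    \<le> X\<^sup>2 / 2 + (1 - d) / (2 * \<alpha>) * W\<^sup>2 + d * \<alpha> / 2 * La\<^sup>2 + P / (2 * \<beta>) + \<epsilon> * y"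
proof -
  have "- (\<epsilon> * y) \<le> \<epsilon> * sB * (X * La)"
    using y \<open>0 < \<epsilon>\<close> mult_left_mono[of "- y" "sB * X * La" \<epsilon>] by (simp add: mult.assoc)
  also have "\<dots> \<le> \<epsilon> * sB * ((X\<^sup>2 + La\<^sup>2) / 2)"
    using sum_squares_bound[of X La] assms by (intro mult_left_mono) auto
  also have "\<dots> \<le> X\<^sup>2 / 4 + d * \<alpha> / 4 * La\<^sup>2"
    using mult_right_mono[OF small(1), of "X\<^sup>2"] mult_right_mono[OF small(2), of "La\<^sup>2"]
    by (simp add: field_simps)
  finally have cross: "- (\<epsilon> * y) \<le> X\<^sup>2 / 4 + d * \<alpha> / 4 * La\<^sup>2" .
  have "Z\<^sup>2 \<le> (W + \<alpha> * La)\<^sup>2"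
    using Z \<open>0 \<le> Z\<close> by (intro power_mono) auto
  also have "\<dots> \<le> 2 * W\<^sup>2 + 2 * \<alpha>\<^sup>2 * La\<^sup>2"
    using sum_squares_bound[of W "\<alpha> * La"] by (simp add: power2_sum power_mult_distrib algebra_simps)
  finally have "d / (16 * \<alpha>) * Z\<^sup>2 \<le> d / (16 * \<alpha>) * (2 * W\<^sup>2 + 2 * \<alpha>\<^sup>2 * La\<^sup>2)"
    using assms by (intro mult_left_mono) auto
  also have "\<dots> = d / (8 * \<alpha>) * W\<^sup>2 + d * \<alpha> / 8 * La\<^sup>2"
    using \<open>0 < \<alpha>\<close> by (simp add: field_simps power2_eq_square)
  also have "d / (8 * \<alpha>) * W\<^sup>2 \<le> (1 - d) / (2 * \<alpha>) * W\<^sup>2"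
    using assms by (intro mult_right_mono) (auto simp: field_simps)
  finally have "d / (16 * \<alpha>) * Z\<^sup>2 \<le> (1 - d) / (2 * \<alpha>) * W\<^sup>2 + d * \<alpha> / 8 * La\<^sup>2"
    by simp
  moreover have "0 \<le> P / (2 * \<beta>)"
    using assms by simp
  ultimately show ?thesis
    using cross by (simp add: algebra_simps)
qed

lemma lyapunov_upper_scalar:
  fixes X La Z W P y \<alpha> \<beta> d \<epsilon> sB sK :: real
  assumes "0 < \<alpha>" "0 < \<beta>" "0 \<le> d" "d \<le> 1" "0 \<le> \<epsilon>" "0 \<le> sB" "0 \<le> sK" "0 \<le> W"
    and P: "P \<le> sK * Z\<^sup>2" and y: "y \<le> sB * X * La" and W: "W \<le> \<alpha> * La + Z"
  shows "X\<^sup>2 / 2 + (1 - d) / (2 * \<alpha>) * W\<^sup>2 + d * \<alpha> / 2 * La\<^sup>2 + P / (2 * \<beta>) + \<epsilon> * y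
    \<le> (1 + \<epsilon> * sB + 2 * \<alpha> + 1 / \<alpha> + sK / (2 * \<beta>)) * (X\<^sup>2 + La\<^sup>2 + Z\<^sup>2)"
proof -
  have "W\<^sup>2 \<le> (\<alpha> * La + Z)\<^sup>2"
    using W \<open>0 \<le> W\<close> by (intro power_mono) auto
  also have "\<dots> \<le> 2 * \<alpha>\<^sup>2 * La\<^sup>2 + 2 * Z\<^sup>2"
    using sum_squares_bound[of "\<alpha> * La" Z] by (simp add: power2_sum power_mult_distrib algebra_simps)
  finally have "(1 - d) / (2 * \<alpha>) * W\<^sup>2 \<le> (1 - d) / (2 * \<alpha>) * (2 * \<alpha>\<^sup>2 * La\<^sup>2 + 2 * Z\<^sup>2)"
    using assms by (intro mult_left_mono) auto
  also have "\<dots> = (1 - d) * \<alpha> * La\<^sup>2 + (1 - d) / \<alpha> * Z\<^sup>2"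
    using \<open>0 < \<alpha>\<close> by (simp add: field_simps power2_eq_square)
  also have "\<dots> \<le> \<alpha> * La\<^sup>2 + 1 / \<alpha> * Z\<^sup>2"
    using assms by (intro add_mono mult_right_mono) (auto simp: field_simps)
  finally have "(1 - d) / (2 * \<alpha>) * W\<^sup>2 \<le> \<alpha> * La\<^sup>2 + 1 / \<alpha> * Z\<^sup>2" .
  moreover have "\<epsilon> * y \<le> \<epsilon> * sB * (X\<^sup>2 + La\<^sup>2)"
  proof -
    have "\<epsilon> * y \<le> \<epsilon> * sB * (X * La)"
      using y \<open>0 \<le> \<epsilon>\<close> mult_left_mono[of y "sB * X * La" \<epsilon>] by (simp add: mult.assoc)
    also have "\<dots> \<le> \<epsilon> * sB * (X\<^sup>2 + La\<^sup>2)"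
      using mult_le_sum_squares[of X La] assms by (intro mult_left_mono) auto
    finally show ?thesis .
  qed
  moreover have "P / (2 * \<beta>) \<le> sK / (2 * \<beta>) * Z\<^sup>2"
    using divide_right_mono[OF P, of "2 * \<beta>"] \<open>0 < \<beta>\<close> by simp
  moreover have "d * \<alpha> / 2 * La\<^sup>2 \<le> \<alpha> * La\<^sup>2"
    using assms by (intro mult_right_mono) auto
  moreover have "X\<^sup>2 / 2 \<le> X\<^sup>2"
    by simp
  ultimately have "X\<^sup>2 / 2 + (1 - d) / (2 * \<alpha>) * W\<^sup>2 + d * \<alpha> / 2 * La\<^sup>2 + P / (2 * \<beta>) + \<epsilon> * y
      \<le> X\<^sup>2 + (\<alpha> * La\<^sup>2 + 1 / \<alpha> * Z\<^sup>2) + \<alpha> * La\<^sup>2 + sK / (2 * \<beta>) * Z\<^sup>2 + \<epsilon> * sB * (X\<^sup>2 + La\<^sup>2)"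
    by linarith
  also have "\<dots> \<le> (1 + \<epsilon> * sB + 2 * \<alpha> + 1 / \<alpha> + sK / (2 * \<beta>)) * (X\<^sup>2 + La\<^sup>2 + Z\<^sup>2)"
  proof -
    have "0 \<le> (2 * \<alpha> + 1 / \<alpha> + sK / (2 * \<beta>)) * X\<^sup>2 + (1 + 1 / \<alpha> + sK / (2 * \<beta>)) * La\<^sup>2
        + (1 + \<epsilon> * sB + 2 * \<alpha>) * Z\<^sup>2"
      using assms by (intro add_nonneg_nonneg mult_nonneg_nonneg) auto
    then show ?thesis
      by (simp add: algebra_simps)
  qed
  finally show ?thesis .
qed

section \<open>Differential inequalities\<close>

lemma exp_decay_of_deriv_le:
  fixes V V' :: "real \<Rightarrow> real"
  assumes deriv: "\<And>t. 0 \<le> t \<Longrightarrow> (V has_real_derivative V' t) (at t within {0..})"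
    and le: "\<And>t. 0 \<le> t \<Longrightarrow> V' t \<le> - r * V t"
    and "0 \<le> t"
  shows "V t \<le> V 0 * exp (- r * t)"
proof -
  define W where "W s = V s * exp (r * s)" for s
  have W': "(W has_real_derivative (V' s + r * V s) * exp (r * s)) (at s within {0..})"
    if "0 \<le> s" for s
    unfolding W_def using deriv[OF that]
    by (auto intro!: derivative_eq_intros simp: algebra_simps)
  have "continuous_on {0..} W"
    using W' by (intro continuous_on_vector_derivative)
      (auto simp: has_real_derivative_iff_has_vector_derivative)
  then have "continuous_on {0..t} W"
    by (rule continuous_on_subset) auto
  have "W t \<le> W 0"
  proof (rule DERIV_nonpos_imp_decreasing_open[OF \<open>0 \<le> t\<close> _ \<open>continuous_on {0..t} W\<close>])
    fix s assume s: "0 < s" "s < t"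
    then have "at s within {0..} = at s"
      by (intro at_within_interior) simp
    then have "DERIV W s :> (V' s + r * V s) * exp (r * s)"
      using W'[of s] s by simp
    moreover have "(V' s + r * V s) * exp (r * s) \<le> 0"
      using le[of s] s by (intro mult_nonpos_nonneg) auto
    ultimately show "\<exists>y. DERIV W s :> y \<and> y \<le> 0"
      by blast
  qed
  then have "V t * exp (r * t) * exp (- r * t) \<le> V 0 * exp (- r * t)"
    by (intro mult_right_mono) (auto simp: W_def)
  then show ?thesis
    by (simp add: exp_minus field_simps)
qed

lemma has_real_derivative_inner:
  fixes u w :: "real \<Rightarrow> 'a::real_inner"
  assumes "(u has_vector_derivative u') (at t within S)"
    and "(w has_vector_derivative w') (at t within S)"
  shows "((\<lambda>s. u s \<bullet> w s) has_real_derivative u t \<bullet> w' + u' \<bullet> w t) (at t within S)"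
  using bounded_bilinear.has_vector_derivative[OF bounded_bilinear_inner assms]
  by (simp add: has_real_derivative_iff_has_vector_derivative)

lemma has_real_derivative_power2_norm:
  fixes u :: "real \<Rightarrow> 'a::real_inner"
  assumes "(u has_vector_derivative u') (at t within S)"
  shows "((\<lambda>s. (norm (u s))\<^sup>2) has_real_derivative 2 * (u t \<bullet> u')) (at t within S)"
proof -
  have "u t \<bullet> u' + u' \<bullet> u t = 2 * (u t \<bullet> u')"
    by (simp add: inner_commute)
  then show ?thesis
    using has_real_derivative_inner[OF assms assms] by (simp add: power2_norm_eq_inner)
qed

section \<open>Lyapunov analysis of the error dynamics\<close>

text \<open>Error dynamics of IDEA around an equilibrium, in abstract form: \<open>B\<close>, \<open>BT\<close> and \<open>L\<close> stand
  for bold-A, its transpose and bold-L, \<open>K\<close> for an inverse of \<open>L\<close> on the zero-sum vectors, among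
  which \<open>ez\<close> stays, and \<open>g\<close> for the gradient difference \<open>\<nabla>f(x) - \<nabla>f(xs)\<close>.\<close>

locale idea_error_system =
  fixes B :: "'a::euclidean_space \<Rightarrow> 'b::euclidean_space" and BT :: "'b \<Rightarrow> 'a"
    and L K :: "'b \<Rightarrow> 'b"
    and \<alpha> \<beta> \<mu> lg \<kappa> sB :: real
    and ex g :: "real \<Rightarrow> 'a" and el ez :: "real \<Rightarrow> 'b"
  assumes linear_B: "linear B" and linear_L: "linear L" and linear_K: "linear K"
    and B_adjoint: "\<And>u w. B u \<bullet> w = u \<bullet> BT w"
    and norm_B_le: "\<And>u. norm (B u) \<le> sB * norm u" and sB_pos: "0 < sB"
    and L_symmetric: "\<And>u w. L u \<bullet> w = u \<bullet> L w" and L_nonneg: "\<And>w. 0 \<le> w \<bullet> L w"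
    and K_symmetric: "\<And>u w. K u \<bullet> w = u \<bullet> K w" and K_nonneg: "\<And>w. 0 \<le> K w \<bullet> w"
    and kappa_pos: "0 < \<kappa>"
    and coercive: "\<And>w. \<kappa> * (norm w)\<^sup>2 \<le> (norm (BT w))\<^sup>2 + w \<bullet> L w"
    and alpha_pos: "0 < \<alpha>" and beta_pos: "0 < \<beta>" and mu_pos: "0 < \<mu>" and lg_nonneg: "0 \<le> lg"
    and L_K_ez: "\<And>t. 0 \<le> t \<Longrightarrow> L (K (ez t)) = ez t"
    and g_strongly_monotone: "\<And>t. 0 \<le> t \<Longrightarrow> \<mu> * (norm (ex t))\<^sup>2 \<le> ex t \<bullet> g t"
    and g_lipschitz: "\<And>t. 0 \<le> t \<Longrightarrow> norm (g t) \<le> lg * norm (ex t)"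
    and ex_deriv: "\<And>t. 0 \<le> t \<Longrightarrow> (ex has_vector_derivative
          - \<alpha> *\<^sub>R (g t + BT (el t)) - BT (B (ex t) - ez t)) (at t within {0..})"
    and el_deriv: "\<And>t. 0 \<le> t \<Longrightarrow> (el has_vector_derivative
          B (ex t) - ez t - \<beta> *\<^sub>R L (el t)) (at t within {0..})"
    and ez_deriv: "\<And>t. 0 \<le> t \<Longrightarrow>
          (ez has_vector_derivative (\<alpha> * \<beta>) *\<^sub>R L (el t)) (at t within {0..})"
begin

lemma norm_BT_le: "norm (BT w) \<le> sB * norm w"
proof -
  have "(norm (BT w))\<^sup>2 = B (BT w) \<bullet> w"
    by (simp add: B_adjoint power2_norm_eq_inner)
  also have "\<dots> \<le> norm (B (BT w)) * norm w"
    by (rule norm_cauchy_schwarz)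
  also have "\<dots> \<le> sB * norm (BT w) * norm w"
    by (rule mult_right_mono[OF norm_B_le norm_ge_zero])
  finally have "norm (BT w) * norm (BT w) \<le> norm (BT w) * (sB * norm w)"
    by (simp add: power2_eq_square ac_simps)
  then show ?thesis
    using sB_pos by (cases "norm (BT w) = 0") (auto simp: mult_le_cancel_left_pos)
qed

definition ex_rate :: "real \<Rightarrow> 'a" where
  "ex_rate t = - \<alpha> *\<^sub>R (g t + BT (el t)) - BT (B (ex t) - ez t)"

definition el_rate :: "real \<Rightarrow> 'b" where
  "el_rate t = B (ex t) - ez t - \<beta> *\<^sub>R L (el t)"

lemma ex_has_derivative: "0 \<le> t \<Longrightarrow> (ex has_vector_derivative ex_rate t) (at t within {0..})"
  using ex_deriv by (simp add: ex_rate_def)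

lemma el_has_derivative: "0 \<le> t \<Longrightarrow> (el has_vector_derivative el_rate t) (at t within {0..})"
  using el_deriv by (simp add: el_rate_def)

lemma weighted_sum_has_derivative:
  assumes "0 \<le> t"
  shows "((\<lambda>s. \<alpha> *\<^sub>R el s + ez s) has_vector_derivative \<alpha> *\<^sub>R (B (ex t) - ez t)) (at t within {0..})"
proof -
  have "((\<lambda>s. \<alpha> *\<^sub>R el s + ez s) has_vector_derivative \<alpha> *\<^sub>R el_rate t + (\<alpha> * \<beta>) *\<^sub>R L (el t))
      (at t within {0..})"
    by (intro has_vector_derivative_add ez_deriv[OF assms] el_has_derivative[OF assms]
        bounded_linear.has_vector_derivative[OF bounded_linear_scaleR_right])
  moreover have "\<alpha> *\<^sub>R el_rate t + (\<alpha> * \<beta>) *\<^sub>R L (el t) = \<alpha> *\<^sub>R (B (ex t) - ez t)"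
    by (simp add: el_rate_def algebra_simps)
  ultimately show ?thesis
    by simp
qed

lemma K_ez_inner_L: "0 \<le> t \<Longrightarrow> K (ez t) \<bullet> L w = w \<bullet> ez t"
  using L_symmetric[of "K (ez t)" w] L_K_ez[of t] by (simp add: inner_commute)

definition lyapunov :: "real \<Rightarrow> real \<Rightarrow> real \<Rightarrow> real" where
  "lyapunov d \<epsilon> t = (norm (ex t))\<^sup>2 / 2 + (1 - d) / (2 * \<alpha>) * (norm (\<alpha> *\<^sub>R el t + ez t))\<^sup>2
     + d * \<alpha> / 2 * (norm (el t))\<^sup>2 + K (ez t) \<bullet> ez t / (2 * \<beta>) + \<epsilon> * (B (ex t) \<bullet> el t)"

definition lyapunov_rate :: "real \<Rightarrow> real \<Rightarrow> real \<Rightarrow> real" where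
  "lyapunov_rate d \<epsilon> t = - \<alpha> * (ex t \<bullet> g t) - (norm (B (ex t)))\<^sup>2 + (2 - d) * (B (ex t) \<bullet> ez t)
     - (1 - d) * (norm (ez t))\<^sup>2 - d * \<alpha> * \<beta> * (el t \<bullet> L (el t))
     + \<epsilon> * (BT (el t) \<bullet> ex_rate t + B (ex t) \<bullet> el_rate t)"

lemma lyapunov_rate_eq:
  "lyapunov_rate d \<epsilon> t = ex t \<bullet> ex_rate t + (1 - d) * ((\<alpha> *\<^sub>R el t + ez t) \<bullet> (B (ex t) - ez t))
    + d * \<alpha> * (el t \<bullet> el_rate t) + \<alpha> * (el t \<bullet> ez t)
    + \<epsilon> * (BT (el t) \<bullet> ex_rate t + B (ex t) \<bullet> el_rate t)"
proof -
  define y where "y = B (ex t)"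
  have e1: "ex t \<bullet> ex_rate t = - \<alpha> * (ex t \<bullet> g t) - \<alpha> * (y \<bullet> el t) - y \<bullet> y + y \<bullet> ez t"
    by (simp add: ex_rate_def y_def inner_diff_right inner_add_right B_adjoint[symmetric] algebra_simps)
  have e2: "(\<alpha> *\<^sub>R el t + ez t) \<bullet> (y - ez t)
      = \<alpha> * (y \<bullet> el t) - \<alpha> * (el t \<bullet> ez t) + y \<bullet> ez t - ez t \<bullet> ez t"
    by (simp add: inner_add_left inner_diff_right inner_commute[of _ y] algebra_simps)
  have e3: "el t \<bullet> el_rate t = y \<bullet> el t - el t \<bullet> ez t - \<beta> * (el t \<bullet> L (el t))"
    by (simp add: el_rate_def y_def inner_diff_right inner_commute[of "el t" "B (ex t)"])
  show ?thesis
    unfolding lyapunov_rate_def power2_norm_eq_inner y_def[symmetric] e1 e2 e3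
    by (simp add: algebra_simps)
qed

lemma lyapunov_has_derivative:
  assumes "0 \<le> t"
  shows "(lyapunov d \<epsilon> has_real_derivative lyapunov_rate d \<epsilon> t) (at t within {0..})"
proof -
  let ?F = "at t within {0..}"
  note ex' = ex_has_derivative[OF assms] and el' = el_has_derivative[OF assms]
    and ez' = ez_deriv[OF assms]
  have Kez': "((\<lambda>s. K (ez s)) has_vector_derivative K ((\<alpha> * \<beta>) *\<^sub>R L (el t))) ?F"
    using linear_K by (auto intro: bounded_linear.has_vector_derivative[OF _ ez'] simp: linear_conv_bounded_linear)
  have Bex': "((\<lambda>s. B (ex s)) has_vector_derivative B (ex_rate t)) ?F"
    using linear_B by (auto intro: bounded_linear.has_vector_derivative[OF _ ex'] simp: linear_conv_bounded_linear)
  have "((\<lambda>s. (norm (ex s))\<^sup>2 / 2) has_real_derivative ex t \<bullet> ex_rate t) ?F"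
    by (rule DERIV_cong[OF DERIV_cdivide[OF has_real_derivative_power2_norm[OF ex']]]) simp
  moreover have "((\<lambda>s. (1 - d) / (2 * \<alpha>) * (norm (\<alpha> *\<^sub>R el s + ez s))\<^sup>2) has_real_derivative
      (1 - d) * ((\<alpha> *\<^sub>R el t + ez t) \<bullet> (B (ex t) - ez t))) ?F"
    by (rule DERIV_cong[OF DERIV_cmult[OF has_real_derivative_power2_norm[OF
          weighted_sum_has_derivative[OF assms]]]]) (use alpha_pos in simp)
  moreover have "((\<lambda>s. d * \<alpha> / 2 * (norm (el s))\<^sup>2) has_real_derivative d * \<alpha> * (el t \<bullet> el_rate t)) ?F"
    by (rule DERIV_cong[OF DERIV_cmult[OF has_real_derivative_power2_norm[OF el']]]) simp
  moreover have "((\<lambda>s. K (ez s) \<bullet> ez s / (2 * \<beta>)) has_real_derivative \<alpha> * (el t \<bullet> ez t)) ?F"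
  proof -
    have "K (L (el t)) \<bullet> ez t = K (ez t) \<bullet> L (el t)"
      using K_symmetric[of "L (el t)" "ez t"] by (simp add: inner_commute)
    then have Kez_term: "K (ez t) \<bullet> ((\<alpha> * \<beta>) *\<^sub>R L (el t)) + K ((\<alpha> * \<beta>) *\<^sub>R L (el t)) \<bullet> ez t
        = 2 * \<alpha> * \<beta> * (el t \<bullet> ez t)"
      using K_ez_inner_L[OF assms, of "el t"] by (simp add: linear_cmul[OF linear_K])
    show ?thesis
      by (rule DERIV_cong[OF DERIV_cdivide[OF has_real_derivative_inner[OF Kez' ez']]])
        (use Kez_term beta_pos in simp)
  qed
  moreover have "((\<lambda>s. \<epsilon> * (B (ex s) \<bullet> el s)) has_real_derivative
      \<epsilon> * (BT (el t) \<bullet> ex_rate t + B (ex t) \<bullet> el_rate t)) ?F"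
    by (rule DERIV_cong[OF DERIV_cmult[OF has_real_derivative_inner[OF Bex' el']]])
      (simp add: B_adjoint inner_commute[of "ex_rate t"])
  ultimately show ?thesis
    unfolding lyapunov_def[abs_def] lyapunov_rate_eq by (intro DERIV_add)
qed

lemma dissipation_le:
  assumes "0 \<le> t" "0 < d" "d \<le> 1/2" "d * sB\<^sup>2 \<le> \<alpha> * \<mu> / 2"
  shows "- \<alpha> * (ex t \<bullet> g t) - (norm (B (ex t)))\<^sup>2 + (2 - d) * (B (ex t) \<bullet> ez t)
      - (1 - d) * (norm (ez t))\<^sup>2
    \<le> - \<alpha> * \<mu> / 2 * (norm (ex t))\<^sup>2 - d / 4 * (norm (ez t))\<^sup>2"
proof -
  have "\<alpha> * (\<mu> * (norm (ex t))\<^sup>2) \<le> \<alpha> * (ex t \<bullet> g t)"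
    using g_strongly_monotone[OF assms(1)] alpha_pos by (intro mult_left_mono) auto
  moreover have "(2 - d) * (B (ex t) \<bullet> ez t) - (norm (B (ex t)))\<^sup>2 - (1 - d) * (norm (ez t))\<^sup>2
      \<le> d * (norm (B (ex t)))\<^sup>2 - d / 4 * (norm (ez t))\<^sup>2"
    using assms by (intro dissipation_quadratic_le norm_cauchy_schwarz) auto
  moreover have "d * (norm (B (ex t)))\<^sup>2 \<le> \<alpha> * \<mu> / 2 * (norm (ex t))\<^sup>2"
  proof -
    have "(norm (B (ex t)))\<^sup>2 \<le> (sB * norm (ex t))\<^sup>2"
      using norm_B_le by (intro power_mono) auto
    then have "d * (norm (B (ex t)))\<^sup>2 \<le> d * sB\<^sup>2 * (norm (ex t))\<^sup>2"
      using \<open>0 < d\<close> by (simp add: power_mult_distrib mult.assoc)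
    also have "\<dots> \<le> \<alpha> * \<mu> / 2 * (norm (ex t))\<^sup>2"
      using assms(4) by (intro mult_right_mono) auto
    finally show ?thesis .
  qed
  ultimately show ?thesis
    by (simp add: algebra_simps)
qed

definition c_cross :: real where
  "c_cross = (\<alpha> * lg + sB\<^sup>2 + sB)\<^sup>2 / \<alpha> + sB\<^sup>2 + sB"

definition c_lapl :: real where
  "c_lapl = \<beta> * sB * onorm L"

lemma cross_rate_le:
  assumes "0 \<le> t"
  shows "BT (el t) \<bullet> ex_rate t + B (ex t) \<bullet> el_rate t
    \<le> - \<alpha> / 2 * (norm (BT (el t)))\<^sup>2 + c_cross * ((norm (ex t))\<^sup>2 + (norm (ez t))\<^sup>2)
      + c_lapl * norm (ex t) * norm (el t)"
proof -
  define y q X Z La where "y = B (ex t)" and "q = norm (BT (el t))" and "X = norm (ex t)"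
    and "Z = norm (ez t)" and "La = norm (el t)"
  have y_le: "norm y \<le> sB * X"
    unfolding y_def X_def by (rule norm_B_le)
  have "BT (el t) \<bullet> ex_rate t + y \<bullet> el_rate t
      = - \<alpha> * (BT (el t) \<bullet> g t) - \<alpha> * q\<^sup>2 - BT (el t) \<bullet> BT (y - ez t)
        + y \<bullet> y - y \<bullet> ez t - \<beta> * (y \<bullet> L (el t))"
    by (simp add: ex_rate_def el_rate_def y_def q_def power2_norm_eq_inner inner_diff_right
        inner_add_right algebra_simps)
  moreover have "- (BT (el t) \<bullet> g t) \<le> q * (lg * X)"
    using norm_cauchy_schwarz[of "- BT (el t)" "g t"] g_lipschitz[OF assms]
      mult_left_mono[of "norm (g t)" "lg * X" q]
    unfolding q_def X_def by simp
  then have "- \<alpha> * (BT (el t) \<bullet> g t) \<le> \<alpha> * q * lg * X"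
    using alpha_pos mult_left_mono[of "- (BT (el t) \<bullet> g t)" "q * (lg * X)" \<alpha>] by (simp add: ac_simps)
  moreover have "- (BT (el t) \<bullet> BT (y - ez t)) \<le> q * sB * (sB * X + Z)"
  proof -
    have "norm (y - ez t) \<le> sB * X + Z"
      using norm_triangle_ineq4[of y "ez t"] y_le unfolding Z_def by linarith
    then have "norm (BT (y - ez t)) \<le> sB * (sB * X + Z)"
      using norm_BT_le[of "y - ez t"] mult_left_mono[of "norm (y - ez t)" "sB * X + Z" sB] sB_pos
      by linarith
    then have "q * norm (BT (y - ez t)) \<le> q * (sB * (sB * X + Z))"
      unfolding q_def by (intro mult_left_mono) auto
    moreover have "- (BT (el t) \<bullet> BT (y - ez t)) \<le> q * norm (BT (y - ez t))"
      using norm_cauchy_schwarz[of "- BT (el t)" "BT (y - ez t)"] unfolding q_def by simp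
    ultimately show ?thesis
      by (simp add: ac_simps)
  qed
  moreover have "y \<bullet> y \<le> sB\<^sup>2 * X\<^sup>2"
    using power_mono[OF y_le norm_ge_zero, of 2] by (simp add: power2_norm_eq_inner power_mult_distrib)
  moreover have "- (y \<bullet> ez t) \<le> sB * X * Z"
    using norm_cauchy_schwarz[of "- y" "ez t"] mult_right_mono[OF y_le norm_ge_zero, of "ez t"]
    unfolding Z_def by simp
  moreover have "- \<beta> * (y \<bullet> L (el t)) \<le> c_lapl * X * La"
  proof -
    have "- (y \<bullet> L (el t)) \<le> norm y * norm (L (el t))"
      using norm_cauchy_schwarz[of "- y" "L (el t)"] by simp
    also have "\<dots> \<le> (sB * X) * (onorm L * La)"
      using y_le onorm[of L "el t"] linear_L sB_pos
      by (intro mult_mono) (auto simp: La_def X_def linear_conv_bounded_linear)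
    finally show ?thesis
      using beta_pos mult_left_mono[of "- (y \<bullet> L (el t))" "(sB * X) * (onorm L * La)" \<beta>]
      by (simp add: c_lapl_def ac_simps)
  qed
  ultimately have "BT (el t) \<bullet> ex_rate t + B (ex t) \<bullet> el_rate t
      \<le> - \<alpha> * q\<^sup>2 + \<alpha> * q * lg * X + q * sB * (sB * X + Z) + sB\<^sup>2 * X\<^sup>2 + sB * X * Z
        + c_lapl * X * La"
    unfolding y_def by linarith
  then show ?thesis
    unfolding c_cross_def q_def X_def Z_def La_def
    by (rule cross_rate_scalar_le[OF alpha_pos lg_nonneg sB_pos norm_ge_zero norm_ge_zero norm_ge_zero])
qed

definition admissible_weights :: "real \<Rightarrow> real \<Rightarrow> bool" where
  "admissible_weights d \<epsilon> \<longleftrightarrow> 0 < d \<and> d \<le> 1/2 \<and> d * sB\<^sup>2 \<le> \<alpha> * \<mu> / 2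
     \<and> 0 < \<epsilon> \<and> \<epsilon> \<le> 2 * d * \<beta> \<and> \<epsilon> * (c_cross + c_lapl\<^sup>2 / (\<alpha> * \<kappa>)) \<le> \<alpha> * \<mu> / 4
     \<and> \<epsilon> * c_cross \<le> d / 8 \<and> \<epsilon> * sB \<le> 1/2 \<and> \<epsilon> * sB \<le> d * \<alpha> / 2"

lemma admissible_weights_exist: "\<exists>d \<epsilon>. admissible_weights d \<epsilon>"
proof -
  define d where "d = min (1/2) (\<alpha> * \<mu> / (2 * sB\<^sup>2))"
  have d: "0 < d" "d \<le> 1/2" "d * sB\<^sup>2 \<le> \<alpha> * \<mu> / 2"
    using alpha_pos mu_pos sB_pos by (auto simp: d_def field_simps min_def)
  have c_cross_pos: "0 < c_cross"
    using alpha_pos sB_pos unfolding c_cross_def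
    by (intro add_nonneg_pos add_nonneg_nonneg divide_nonneg_pos) auto
  have c_pos: "0 < c_cross + c_lapl\<^sup>2 / (\<alpha> * \<kappa>)"
    using c_cross_pos alpha_pos kappa_pos by (simp add: add_pos_nonneg)
  define \<epsilon> where "\<epsilon> = Min {2 * d * \<beta>, \<alpha> * \<mu> / (4 * (c_cross + c_lapl\<^sup>2 / (\<alpha> * \<kappa>))),
      d / (8 * c_cross), 1 / (2 * sB), d * \<alpha> / (2 * sB)}"
  have "0 < \<epsilon>"
    unfolding \<epsilon>_def using d alpha_pos beta_pos mu_pos sB_pos c_pos c_cross_pos by simp
  moreover have "\<epsilon> \<le> 2 * d * \<beta>" "\<epsilon> \<le> \<alpha> * \<mu> / (4 * (c_cross + c_lapl\<^sup>2 / (\<alpha> * \<kappa>)))"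
    "\<epsilon> \<le> d / (8 * c_cross)" "\<epsilon> \<le> 1 / (2 * sB)" "\<epsilon> \<le> d * \<alpha> / (2 * sB)"
    unfolding \<epsilon>_def by simp_all
  ultimately have "admissible_weights d \<epsilon>"
    unfolding admissible_weights_def using d c_pos c_cross_pos sB_pos by (simp add: field_simps)
  then show ?thesis
    by blast
qed

lemma lyapunov_rate_le:
  assumes "0 \<le> t" and "admissible_weights d \<epsilon>"
  shows "lyapunov_rate d \<epsilon> t \<le> - \<alpha> * \<mu> / 4 * (norm (ex t))\<^sup>2 - d / 8 * (norm (ez t))\<^sup>2
    - \<epsilon> * \<alpha> * \<kappa> / 4 * (norm (el t))\<^sup>2"
proof -
  have "lyapunov_rate d \<epsilon> t \<le> - \<alpha> * \<mu> / 2 * (norm (ex t))\<^sup>2 - d / 4 * (norm (ez t))\<^sup>2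
      - d * \<alpha> * \<beta> * (el t \<bullet> L (el t)) + \<epsilon> * (BT (el t) \<bullet> ex_rate t + B (ex t) \<bullet> el_rate t)"
    using dissipation_le[OF \<open>0 \<le> t\<close>, of d] assms(2)
    unfolding lyapunov_rate_def admissible_weights_def by linarith
  then show ?thesis
    using assms(2) unfolding admissible_weights_def
    by (intro lyapunov_rate_scalar_le[OF alpha_pos kappa_pos _ L_nonneg[of "el t"] _
        cross_rate_le[OF \<open>0 \<le> t\<close>] coercive[of "el t"]]) auto
qed

definition error_sq :: "real \<Rightarrow> real" where
  "error_sq t = (norm (ex t))\<^sup>2 + (norm (el t))\<^sup>2 + (norm (ez t))\<^sup>2"

lemma error_sq_nonneg: "0 \<le> error_sq t"
  by (simp add: error_sq_def)

lemma inner_B_el_le: "\<bar>B (ex t) \<bullet> el t\<bar> \<le> sB * norm (ex t) * norm (el t)"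
proof -
  have "\<bar>B (ex t) \<bullet> el t\<bar> \<le> norm (B (ex t)) * norm (el t)"
    by (rule Cauchy_Schwarz_ineq2)
  also have "\<dots> \<le> sB * norm (ex t) * norm (el t)"
    using norm_B_le by (intro mult_right_mono) auto
  finally show ?thesis .
qed

lemma lyapunov_lower:
  assumes "admissible_weights d \<epsilon>"
  shows "min (1/4) (min (d * \<alpha> / 8) (d / (16 * \<alpha>))) * error_sq t \<le> lyapunov d \<epsilon> t"
proof -
  let ?m = "min (1/4) (min (d * \<alpha> / 8) (d / (16 * \<alpha>)))"
  have "norm (ez t) \<le> norm (\<alpha> *\<^sub>R el t + ez t) + \<alpha> * norm (el t)"
    using norm_triangle_ineq4[of "\<alpha> *\<^sub>R el t + ez t" "\<alpha> *\<^sub>R el t"] alpha_pos by simp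
  then have "(norm (ex t))\<^sup>2 / 4 + d * \<alpha> / 8 * (norm (el t))\<^sup>2 + d / (16 * \<alpha>) * (norm (ez t))\<^sup>2
      \<le> lyapunov d \<epsilon> t"
    unfolding lyapunov_def using assms sB_pos alpha_pos beta_pos K_nonneg[of "ez t"]
    unfolding admissible_weights_def
    by (intro lyapunov_lower_scalar[OF _ _ _ _ _ _ _ _ inner_B_el_le]) auto
  moreover have "?m * (norm (ex t))\<^sup>2 \<le> 1/4 * (norm (ex t))\<^sup>2"
    "?m * (norm (el t))\<^sup>2 \<le> d * \<alpha> / 8 * (norm (el t))\<^sup>2"
    "?m * (norm (ez t))\<^sup>2 \<le> d / (16 * \<alpha>) * (norm (ez t))\<^sup>2"
    by (intro mult_right_mono; simp)+
  ultimately show ?thesis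
    unfolding error_sq_def distrib_left by linarith
qed

lemma lyapunov_upper:
  assumes "0 \<le> d" "d \<le> 1" "0 \<le> \<epsilon>"
  shows "lyapunov d \<epsilon> t
    \<le> (1 + \<epsilon> * sB + 2 * \<alpha> + 1 / \<alpha> + onorm K / (2 * \<beta>)) * error_sq t"
proof -
  have "K (ez t) \<bullet> ez t \<le> norm (K (ez t)) * norm (ez t)"
    by (rule norm_cauchy_schwarz)
  also have "\<dots> \<le> onorm K * norm (ez t) * norm (ez t)"
    using linear_K by (intro mult_right_mono onorm) (auto simp: linear_conv_bounded_linear)
  finally have "K (ez t) \<bullet> ez t \<le> onorm K * (norm (ez t))\<^sup>2"
    by (simp add: power2_eq_square mult.assoc)
  moreover have "norm (\<alpha> *\<^sub>R el t + ez t) \<le> \<alpha> * norm (el t) + norm (ez t)"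
    using norm_triangle_ineq[of "\<alpha> *\<^sub>R el t" "ez t"] alpha_pos by simp
  moreover have "0 \<le> onorm K"
    using linear_K by (simp add: onorm_pos_le linear_conv_bounded_linear)
  ultimately show ?thesis
    unfolding lyapunov_def error_sq_def using assms alpha_pos beta_pos sB_pos inner_B_el_le[of t]
    by (intro lyapunov_upper_scalar) auto
qed

lemma lyapunov_exp_decay:
  assumes "admissible_weights d \<epsilon>"
  obtains r where "0 < r" "\<And>t. 0 \<le> t \<Longrightarrow> lyapunov d \<epsilon> t \<le> lyapunov d \<epsilon> 0 * exp (- r * t)"
proof -
  define a where "a = min (\<alpha> * \<mu> / 4) (min (d / 8) (\<epsilon> * \<alpha> * \<kappa> / 4))"
  define M where "M = 1 + \<epsilon> * sB + 2 * \<alpha> + 1 / \<alpha> + onorm K / (2 * \<beta>)"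
  have "0 < a"
    using assms alpha_pos mu_pos kappa_pos by (simp add: a_def admissible_weights_def)
  have "0 < M"
    using assms sB_pos alpha_pos beta_pos linear_K
    by (simp add: M_def admissible_weights_def add_pos_nonneg onorm_pos_le linear_conv_bounded_linear)
  have rate: "lyapunov_rate d \<epsilon> t \<le> - (a / M) * lyapunov d \<epsilon> t" if "0 \<le> t" for t
  proof -
    have "a * (norm (ex t))\<^sup>2 \<le> \<alpha> * \<mu> / 4 * (norm (ex t))\<^sup>2"
      "a * (norm (el t))\<^sup>2 \<le> \<epsilon> * \<alpha> * \<kappa> / 4 * (norm (el t))\<^sup>2"
      "a * (norm (ez t))\<^sup>2 \<le> d / 8 * (norm (ez t))\<^sup>2"
      unfolding a_def by (intro mult_right_mono; simp)+
    then have "lyapunov_rate d \<epsilon> t \<le> - a * error_sq t"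
      using lyapunov_rate_le[OF that assms] unfolding error_sq_def distrib_left by linarith
    moreover have "a / M * lyapunov d \<epsilon> t \<le> a / M * (M * error_sq t)"
      using lyapunov_upper[of d \<epsilon> t] assms \<open>0 < a\<close> \<open>0 < M\<close>
      by (intro mult_left_mono) (auto simp: M_def admissible_weights_def)
    ultimately show ?thesis
      using \<open>0 < M\<close> by simp
  qed
  show ?thesis
  proof (rule that)
    show "0 < a / M"
      using \<open>0 < a\<close> \<open>0 < M\<close> by simp
    show "lyapunov d \<epsilon> t \<le> lyapunov d \<epsilon> 0 * exp (- (a / M) * t)" if "0 \<le> t" for t
      using exp_decay_of_deriv_le[OF lyapunov_has_derivative rate that] .
  qed
qed

lemma error_sq_exp_decay:
  obtains C c where "0 < C" "0 < c" "\<And>t. 0 \<le> t \<Longrightarrow> error_sq t \<le> C * exp (- c * t)"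
proof -
  obtain d \<epsilon> where weights: "admissible_weights d \<epsilon>"
    using admissible_weights_exist by blast
  then obtain r where "0 < r" and decay: "\<And>t. 0 \<le> t \<Longrightarrow> lyapunov d \<epsilon> t \<le> lyapunov d \<epsilon> 0 * exp (- r * t)"
    using lyapunov_exp_decay by blast
  define m where "m = min (1/4) (min (d * \<alpha> / 8) (d / (16 * \<alpha>)))"
  have "0 < m"
    using weights alpha_pos by (simp add: m_def admissible_weights_def)
  have lower: "m * error_sq t \<le> lyapunov d \<epsilon> t" for t
    unfolding m_def by (rule lyapunov_lower[OF weights])
  have "0 \<le> lyapunov d \<epsilon> 0"
    using mult_nonneg_nonneg[OF less_imp_le[OF \<open>0 < m\<close>] error_sq_nonneg[of 0]] lower[of 0] by linarith
  show ?thesis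
  proof
    show "0 < lyapunov d \<epsilon> 0 / m + 1"
      using divide_nonneg_pos[OF \<open>0 \<le> lyapunov d \<epsilon> 0\<close> \<open>0 < m\<close>] by linarith
    show "0 < r"
      by fact
    fix t :: real
    assume "0 \<le> t"
    have "m * error_sq t \<le> lyapunov d \<epsilon> 0 * exp (- r * t)"
      using lower[of t] decay[OF \<open>0 \<le> t\<close>] by linarith
    then have "error_sq t \<le> lyapunov d \<epsilon> 0 / m * exp (- r * t)"
      using \<open>0 < m\<close> by (simp add: field_simps)
    also have "\<dots> \<le> (lyapunov d \<epsilon> 0 / m + 1) * exp (- r * t)"
      by (intro mult_right_mono) auto
    finally show "error_sq t \<le> (lyapunov d \<epsilon> 0 / m + 1) * exp (- r * t)" .
  qed
qed

end

section \<open>Block operators and the graph Laplacian\<close>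

lemma sum_over_blocks:
  fixes blk :: "'d::finite \<Rightarrow> 'n::finite" and h :: "'n \<Rightarrow> 'd \<Rightarrow> 'a::comm_monoid_add"
  shows "(\<Sum>i\<in>UNIV. \<Sum>k\<in>{k. blk k = i}. h i k) = (\<Sum>k\<in>UNIV. h (blk k) k)"
proof -
  have "(\<Sum>i\<in>UNIV. \<Sum>k\<in>{k. blk k = i}. h i k) = (\<Sum>i\<in>UNIV. \<Sum>k\<in>{k\<in>UNIV. blk k = i}. h (blk k) k)"
    by (intro sum.cong) auto
  also have "\<dots> = (\<Sum>k\<in>UNIV. h (blk k) k)"
    by (rule sum.group) auto
  finally show ?thesis .
qed

lemma inner_bigA: "bigA A blk x \<bullet> v = x \<bullet> bigAT A blk v"
proof -
  have "bigA A blk x \<bullet> v = (\<Sum>i\<in>UNIV. \<Sum>k\<in>{k. blk k = i}. \<Sum>j\<in>UNIV. A$j$k * x$k * v$i$j)"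
    unfolding bigA_def inner_vec_def inner_real_def
    by (simp add: sum_distrib_right sum.swap[where A=UNIV])
  also have "\<dots> = (\<Sum>k\<in>UNIV. \<Sum>j\<in>UNIV. A$j$k * x$k * v$(blk k)$j)"
    by (rule sum_over_blocks)
  also have "\<dots> = x \<bullet> bigAT A blk v"
    unfolding bigAT_def inner_vec_def inner_real_def
    by (simp add: sum_distrib_left mult.commute mult.left_commute)
  finally show ?thesis .
qed

lemma linear_bigA: "linear (bigA A blk)"
  by (rule linearI) (simp_all add: bigA_def vec_eq_iff sum.distrib sum_distrib_left algebra_simps)

lemma linear_bigAT: "linear (bigAT A blk)"
  by (rule linearI) (simp_all add: bigAT_def vec_eq_iff sum.distrib sum_distrib_left algebra_simps)

lemma bigAT_const: "bigAT A blk (\<chi> i. c) = transpose A *v c"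
  by (simp add: bigAT_def vec_eq_iff matrix_vector_mult_def transpose_def)

lemma sum_bigA: "(\<Sum>i\<in>UNIV. bigA A blk x $ i) = A *v x"
proof -
  have "(\<Sum>i\<in>UNIV. bigA A blk x $ i) $ j = (A *v x) $ j" for j
  proof -
    have "(\<Sum>i\<in>UNIV. bigA A blk x $ i) $ j = (\<Sum>i\<in>UNIV. \<Sum>k\<in>{k. blk k = i}. A$j$k * x$k)"
      by (simp add: sum_component bigA_def)
    also have "\<dots> = (\<Sum>k\<in>UNIV. A$j$k * x$k)"
      by (rule sum_over_blocks)
    finally show ?thesis
      by (simp add: matrix_vector_mult_def)
  qed
  then show ?thesis
    by (simp add: vec_eq_iff)
qed

lemma linear_lapl: "linear (lapl a)"
  by (rule linearI)
    (simp_all add: lapl_def vec_eq_iff sum.distrib[symmetric] scaleR_sum_right algebra_simps)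

lemma lapl_const: "lapl a (\<chi> i. c) = 0"
  by (simp add: lapl_def vec_eq_iff)

lemma sum_swap_symmetric:
  fixes a h :: "'n::finite \<Rightarrow> 'n \<Rightarrow> real"
  assumes "\<And>i j. a i j = a j i"
  shows "(\<Sum>i\<in>UNIV. \<Sum>j\<in>UNIV. a i j * h j i) = (\<Sum>i\<in>UNIV. \<Sum>j\<in>UNIV. a i j * h i j)"
  by (subst sum.swap) (simp add: assms)

lemma lapl_inner_commute:
  fixes a :: "'n::finite \<Rightarrow> 'n \<Rightarrow> real" and u v :: "real^'p::finite^'n"
  assumes sym: "\<And>i j. a i j = a j i"
  shows "lapl a u \<bullet> v = u \<bullet> lapl a v"
proof -
  have swap: "(\<Sum>i\<in>UNIV. \<Sum>j\<in>UNIV. a i j * (u$j \<bullet> v$i)) = (\<Sum>i\<in>UNIV. \<Sum>j\<in>UNIV. a i j * (u$i \<bullet> v$j))"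
    using sum_swap_symmetric[OF sym, where h="\<lambda>j i. u$j \<bullet> v$i"] by simp
  have "lapl a u \<bullet> v
      = (\<Sum>i\<in>UNIV. \<Sum>j\<in>UNIV. a i j * (u$i \<bullet> v$i)) - (\<Sum>i\<in>UNIV. \<Sum>j\<in>UNIV. a i j * (u$j \<bullet> v$i))"
    unfolding lapl_def
    by (subst inner_vec_def)
      (simp add: inner_sum_left inner_diff_left algebra_simps sum_subtractf sum_distrib_left)
  also have "\<dots> = u \<bullet> lapl a v"
    unfolding swap lapl_def
    by (subst inner_vec_def)
      (simp add: inner_sum_right inner_diff_right algebra_simps sum_subtractf sum_distrib_left)
  finally show ?thesis .
qed

lemma sum_lapl:
  fixes a :: "'n::finite \<Rightarrow> 'n \<Rightarrow> real" and v :: "real^'p::finite^'n"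
  assumes sym: "\<And>i j. a i j = a j i"
  shows "(\<Sum>i\<in>UNIV. lapl a v $ i) = 0"
proof -
  have "(\<Sum>i\<in>UNIV. \<Sum>j\<in>UNIV. a i j *\<^sub>R v$j) = (\<Sum>i\<in>UNIV. \<Sum>j\<in>UNIV. a i j *\<^sub>R v$i)"
    by (subst sum.swap) (simp add: sym)
  then show ?thesis
    unfolding lapl_def by (simp add: scaleR_diff_right sum_subtractf)
qed

text \<open>The incidence operator only serves to write the Laplacian quadratic form as a squared norm,
  so that the coercivity estimate below follows from injectivity of a linear map.\<close>

definition incidence :: "('n \<Rightarrow> 'n \<Rightarrow> real) \<Rightarrow> real^'p^'n \<Rightarrow> real^'p^('n \<times> 'n)" where
  "incidence a v = (\<chi> ij. sqrt (a (fst ij) (snd ij) / 2) *\<^sub>R (v$(fst ij) - v$(snd ij)))"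

lemma linear_incidence: "linear (incidence a)"
  by (rule linearI) (simp_all add: incidence_def vec_eq_iff algebra_simps)

lemma inner_lapl_self:
  fixes a :: "'n::finite \<Rightarrow> 'n \<Rightarrow> real" and v :: "real^'p::finite^'n"
  assumes sym: "\<And>i j. a i j = a j i" and nonneg: "\<And>i j. 0 \<le> a i j"
  shows "v \<bullet> lapl a v = (norm (incidence a v))\<^sup>2"
proof -
  have e1: "(\<Sum>i\<in>UNIV. \<Sum>j\<in>UNIV. a i j * (v$j \<bullet> v$j)) = (\<Sum>i\<in>UNIV. \<Sum>j\<in>UNIV. a i j * (v$i \<bullet> v$i))"
    using sum_swap_symmetric[OF sym, where h="\<lambda>j i. v$j \<bullet> v$j"] by simp
  have e2: "(\<Sum>i\<in>UNIV. \<Sum>j\<in>UNIV. a i j * (v$j \<bullet> v$i)) = (\<Sum>i\<in>UNIV. \<Sum>j\<in>UNIV. a i j * (v$i \<bullet> v$j))"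
    using sum_swap_symmetric[OF sym, where h="\<lambda>j i. v$j \<bullet> v$i"] by simp
  have "(norm (incidence a v))\<^sup>2 = (\<Sum>ij\<in>UNIV. (norm (incidence a v $ ij))\<^sup>2)"
    by (simp add: power2_norm_eq_inner inner_vec_def)
  also have "\<dots> = (\<Sum>ij\<in>UNIV. a (fst ij) (snd ij) / 2 * (norm (v$(fst ij) - v$(snd ij)))\<^sup>2)"
    using nonneg by (intro sum.cong refl) (simp add: incidence_def power_mult_distrib)
  also have "\<dots> = (\<Sum>i\<in>UNIV. \<Sum>j\<in>UNIV. a i j / 2 * (norm (v$i - v$j))\<^sup>2)"
    by (simp add: UNIV_Times_UNIV[symmetric] sum.cartesian_product case_prod_unfold del: UNIV_Times_UNIV)
  also have "\<dots> = (\<Sum>i\<in>UNIV. \<Sum>j\<in>UNIV. a i j * (v$i \<bullet> v$i) / 2 + a i j * (v$j \<bullet> v$j) / 2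
      - a i j * (v$i \<bullet> v$j) / 2 - a i j * (v$j \<bullet> v$i) / 2)"
    by (intro sum.cong refl) (simp add: power2_norm_eq_inner inner_diff_left inner_diff_right algebra_simps)
  also have "\<dots> = (\<Sum>i\<in>UNIV. \<Sum>j\<in>UNIV. a i j * (v$i \<bullet> v$i)) / 2
      + (\<Sum>i\<in>UNIV. \<Sum>j\<in>UNIV. a i j * (v$j \<bullet> v$j)) / 2
      - (\<Sum>i\<in>UNIV. \<Sum>j\<in>UNIV. a i j * (v$i \<bullet> v$j)) / 2
      - (\<Sum>i\<in>UNIV. \<Sum>j\<in>UNIV. a i j * (v$j \<bullet> v$i)) / 2"
    by (simp add: sum.distrib sum_subtractf sum_divide_distrib)
  also have "\<dots> = (\<Sum>i\<in>UNIV. \<Sum>j\<in>UNIV. a i j * (v$i \<bullet> v$i)) - (\<Sum>i\<in>UNIV. \<Sum>j\<in>UNIV. a i j * (v$i \<bullet> v$j))"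
    unfolding e1 e2 by simp
  also have "\<dots> = v \<bullet> lapl a v"
    unfolding lapl_def
    by (subst inner_vec_def)
      (simp add: inner_sum_right inner_diff_right sum_subtractf algebra_simps sum_distrib_left)
  finally show ?thesis ..
qed

lemma incidence_eq_0_imp_consensus:
  fixes a :: "'n::finite \<Rightarrow> 'n \<Rightarrow> real" and v :: "real^'p::finite^'n"
  assumes "incidence a v = 0" and "graph_connected a"
  shows "v$i = v$j"
proof -
  have edge: "v$i' = v$j'" if "a i' j' > 0" for i' j'
  proof -
    have "incidence a v $ (i', j') = 0"
      using assms(1) by simp
    with that show ?thesis
      by (simp add: incidence_def)
  qed
  have "(i, j) \<in> {(i, j). a i j > 0}\<^sup>*"
    using assms(2) unfolding graph_connected_def by blast
  then show ?thesis
    by (induction rule: rtrancl_induct) (auto dest: edge)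
qed

lemma bigAT_lapl_coercive:
  fixes A :: "real^'d::finite^'p::finite" and blk :: "'d \<Rightarrow> 'n::finite" and a :: "'n \<Rightarrow> 'n \<Rightarrow> real"
  assumes sym: "\<And>i j. a i j = a j i" and nonneg: "\<And>i j. 0 \<le> a i j"
    and conn: "graph_connected a" and rank: "rank A = CARD('p)"
  obtains \<kappa> where "0 < \<kappa>" "\<And>v. \<kappa> * (norm v)\<^sup>2 \<le> (norm (bigAT A blk v))\<^sup>2 + v \<bullet> lapl a v"
proof -
  define \<Phi> where "\<Phi> v = (bigAT A blk v, incidence a v)" for v
  have lin: "linear \<Phi>"
    unfolding \<Phi>_def using linear_bigAT[of A blk] linear_incidence[of a] by (simp add: linear_iff)
  have inj_AT: "inj ((*v) (transpose A))"
    using rank by (simp add: full_rank_injective[symmetric] rank_transpose)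
  have "inj \<Phi>"
  proof (subst linear_injective_0[OF lin], intro allI impI)
    fix v assume "\<Phi> v = 0"
    then have AT0: "bigAT A blk v = 0" and D0: "incidence a v = 0"
      by (simp_all add: \<Phi>_def zero_prod_def)
    have "v$i = 0" for i
    proof -
      have "v = (\<chi> j. v$i)"
        using incidence_eq_0_imp_consensus[OF D0 conn] by (simp add: vec_eq_iff)
      then have "transpose A *v (v$i) = 0"
        using AT0 bigAT_const by metis
      then show ?thesis
        using inj_AT by (metis inj_eq matrix_vector_mult_0_right)
    qed
    then show "v = 0"
      by (simp add: vec_eq_iff)
  qed
  then obtain k where "0 < k" and k: "\<And>v. k * norm v \<le> norm (\<Phi> v)"
    using linear_inj_bounded_below_pos[OF lin] by blast
  show ?thesis
  proof
    show "0 < k\<^sup>2"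
      using \<open>0 < k\<close> by simp
    fix v
    have "(k * norm v)\<^sup>2 \<le> (norm (\<Phi> v))\<^sup>2"
      using k[of v] \<open>0 < k\<close> by (intro power_mono) auto
    then show "k\<^sup>2 * (norm v)\<^sup>2 \<le> (norm (bigAT A blk v))\<^sup>2 + v \<bullet> lapl a v"
      by (simp add: \<Phi>_def norm_Pair inner_lapl_self[OF sym nonneg] power_mult_distrib)
  qed
qed

definition block_mean :: "real^'p^'n \<Rightarrow> real^'p^'n" where
  "block_mean v = (\<chi> i. (1 / real CARD('n)) *\<^sub>R (\<Sum>j\<in>UNIV. v$j))"

lemma linear_block_mean: "linear (block_mean :: real^'p::finite^'n::finite \<Rightarrow> _)"
  by (rule linearI) (simp_all add: block_mean_def vec_eq_iff sum.distrib scaleR_sum_right algebra_simps)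

lemma inner_block_mean:
  fixes u v :: "real^'p::finite^'n::finite"
  shows "block_mean u \<bullet> v = (\<Sum>j\<in>UNIV. u$j) \<bullet> (\<Sum>j\<in>UNIV. v$j) / real CARD('n)"
  unfolding block_mean_def
  by (subst inner_vec_def) (simp add: inner_sum_right sum_distrib_left sum_divide_distrib)

lemma sum_block_mean:
  fixes v :: "real^'p::finite^'n::finite"
  shows "(\<Sum>i\<in>UNIV. block_mean v $ i) = (\<Sum>j\<in>UNIV. v$j)"
  using sum_constant_scaleR[of "(1 / real CARD('n)) *\<^sub>R (\<Sum>j\<in>UNIV. v$j)" "UNIV :: 'n set"]
  by (simp add: block_mean_def)

lemma block_mean_eq_0_iff:
  fixes v :: "real^'p::finite^'n::finite"
  shows "block_mean v = 0 \<longleftrightarrow> (\<Sum>j\<in>UNIV. v$j) = 0"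
  by (simp add: block_mean_def vec_eq_iff)

text \<open>Adding the averaging projection to the Laplacian of a connected graph fills in its
  kernel (the consensus vectors) without changing it on zero-sum vectors.\<close>

lemma inj_lapl_plus_block_mean:
  fixes a :: "'n::finite \<Rightarrow> 'n \<Rightarrow> real"
  assumes sym: "\<And>i j. a i j = a j i" and nonneg: "\<And>i j. 0 \<le> a i j" and conn: "graph_connected a"
  shows "inj (\<lambda>v :: real^'p::finite^'n. lapl a v + block_mean v)"
proof -
  have lin: "linear (\<lambda>v :: real^'p^'n. lapl a v + block_mean v)"
    by (intro linear_compose_add linear_lapl linear_block_mean)
  show ?thesis
  proof (subst linear_injective_0[OF lin], intro allI impI)
    fix v :: "real^'p^'n"
    assume v0: "lapl a v + block_mean v = 0"
    then have "(\<Sum>i\<in>UNIV. (lapl a v + block_mean v) $ i) = 0"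
      by simp
    then have sum0: "(\<Sum>j\<in>UNIV. v$j) = 0"
      by (simp add: sum.distrib sum_lapl[where a=a, OF sym] sum_block_mean)
    then have "lapl a v = 0"
      using v0 block_mean_eq_0_iff[of v] by simp
    then have "incidence a v = 0"
      using inner_lapl_self[where a=a and v=v, OF sym nonneg] by simp
    then have v_const: "v$i = v$j" for i j
      using incidence_eq_0_imp_consensus[OF _ conn] by blast
    have "v$i = 0" for i
    proof -
      have "(\<Sum>j\<in>UNIV. v$j) = (\<Sum>j\<in>(UNIV :: 'n set). v$i)"
        using v_const by (intro sum.cong refl)
      also have "\<dots> = real CARD('n) *\<^sub>R v$i"
        by (rule sum_constant_scaleR)
      finally show ?thesis
        using sum0 by simp
    qed
    then show "v = 0"
      by (simp add: vec_eq_iff)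
  qed
qed

lemma lapl_pseudo_inverse:
  fixes a :: "'n::finite \<Rightarrow> 'n \<Rightarrow> real"
  assumes sym: "\<And>i j. a i j = a j i" and nonneg: "\<And>i j. 0 \<le> a i j" and conn: "graph_connected a"
  obtains K :: "real^'p::finite^'n \<Rightarrow> real^'p^'n"
  where "linear K" "\<And>u w. K u \<bullet> w = u \<bullet> K w" "\<And>w. 0 \<le> K w \<bullet> w"
    "\<And>z. (\<Sum>i\<in>UNIV. z$i) = 0 \<Longrightarrow> lapl a (K z) = z"
proof -
  define R where "R v = lapl a v + block_mean v" for v :: "real^'p^'n"
  have R_sym: "R u \<bullet> w = u \<bullet> R w" for u w
    using lapl_inner_commute[where a=a and u=u and v=w, OF sym] inner_block_mean[of u w] inner_block_mean[of w u]
    by (simp add: R_def inner_add_left inner_add_right inner_commute)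
  obtain K where "linear K" and RK: "\<And>z. R (K z) = z"
    using linear_injective_isomorphism[OF _ inj_lapl_plus_block_mean[OF sym nonneg conn]]
      linear_compose_add[OF linear_lapl linear_block_mean]
    unfolding R_def[abs_def] by metis
  show ?thesis
  proof
    show "linear K"
      by fact
    show "K u \<bullet> w = u \<bullet> K w" for u w
      using R_sym[of "K u" "K w"] by (simp add: RK)
    show "0 \<le> K w \<bullet> w" for w
    proof -
      have "K w \<bullet> w = K w \<bullet> lapl a (K w) + K w \<bullet> block_mean (K w)"
        using RK[of w] by (metis R_def inner_add_right)
      moreover have "0 \<le> K w \<bullet> block_mean (K w)"
        using inner_block_mean[of "K w" "K w"] by (simp add: inner_commute)
      ultimately show ?thesis
        using inner_lapl_self[where a=a and v="K w", OF sym nonneg] by simp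
    qed
    show "lapl a (K z) = z" if "(\<Sum>i\<in>UNIV. z$i) = 0" for z
    proof -
      have "(\<Sum>i\<in>UNIV. R (K z) $ i) = (\<Sum>i\<in>UNIV. K z $ i)"
        by (simp add: R_def sum.distrib sum_lapl[where a=a, OF sym] sum_block_mean)
      then have "block_mean (K z) = 0"
        unfolding block_mean_eq_0_iff using that RK[of z] by simp
      then show ?thesis
        using RK[of z] by (simp add: R_def)
    qed
  qed
qed

section \<open>Strong convexity and optimality\<close>

lemma convex_on_gradient_ineq:
  fixes h :: "'a::real_inner \<Rightarrow> real"
  assumes cvx: "convex_on UNIV h" and der: "(h has_derivative (\<lambda>v. v \<bullet> G)) (at x)"
  shows "h x + (y - x) \<bullet> G \<le> h y"
proof -
  define d where "d = y - x"
  define \<phi> where "\<phi> s = h (x + s *\<^sub>R d)" for s :: real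
  have "convex_on UNIV \<phi>"
  proof (rule convex_onI)
    fix t s1 s2 :: real
    assume t: "0 < t" "t < 1"
    have "x + ((1 - t) *\<^sub>R s1 + t *\<^sub>R s2) *\<^sub>R d = (1 - t) *\<^sub>R (x + s1 *\<^sub>R d) + t *\<^sub>R (x + s2 *\<^sub>R d)"
      by (simp add: algebra_simps)
    then show "\<phi> ((1 - t) *\<^sub>R s1 + t *\<^sub>R s2) \<le> (1 - t) * \<phi> s1 + t * \<phi> s2"
      unfolding \<phi>_def using convex_onD[OF cvx, of t] t by simp
  qed simp
  moreover have "(\<phi> has_field_derivative d \<bullet> G) (at 0)"
  proof -
    have "((\<lambda>s::real. x + s *\<^sub>R d) has_derivative (\<lambda>s. s *\<^sub>R d)) (at 0)"
      by (auto intro!: derivative_eq_intros)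
    from has_derivative_compose[OF this, of h "\<lambda>v. v \<bullet> G"] der
    have "(\<phi> has_derivative (\<lambda>s. (s *\<^sub>R d) \<bullet> G)) (at 0)"
      unfolding \<phi>_def by (simp add: o_def)
    then show ?thesis
      unfolding has_field_derivative_def by (simp add: mult.commute[of _ "d \<bullet> G"])
  qed
  ultimately have "(d \<bullet> G) * (1 - 0) \<le> \<phi> 1 - \<phi> 0"
    by (intro convex_on_imp_above_tangent) auto
  then show ?thesis
    unfolding \<phi>_def d_def by (simp add: algebra_simps)
qed

lemma linear_block_proj: "linear (block_proj blk i)"
  by (rule linearI) (simp_all add: block_proj_def vec_eq_iff)

lemma inner_block_proj: "block_proj blk i u \<bullet> block_proj blk i v = block_proj blk i u \<bullet> v"
  unfolding block_proj_def inner_vec_def by (intro sum.cong) auto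

lemma sum_norm_block_proj:
  fixes blk :: "'d::finite \<Rightarrow> 'n::finite"
  shows "(\<Sum>i\<in>UNIV. (norm (block_proj blk i v))\<^sup>2) = (norm v)\<^sup>2"
proof -
  have "(\<Sum>i\<in>UNIV. (norm (block_proj blk i v))\<^sup>2)
      = (\<Sum>i\<in>UNIV. \<Sum>k\<in>UNIV. if blk k = i then v$k * v$k else 0)"
    unfolding power2_norm_eq_inner block_proj_def inner_vec_def by (intro sum.cong) auto
  also have "\<dots> = (\<Sum>k\<in>UNIV. \<Sum>i\<in>UNIV. if blk k = i then v$k * v$k else 0)"
    by (rule sum.swap)
  also have "\<dots> = (norm v)\<^sup>2"
    by (simp add: power2_norm_eq_inner inner_vec_def)
  finally show ?thesis .
qed

lemma strongly_convex_block_gradient_ineq: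
  fixes blk :: "'d::finite \<Rightarrow> 'n::finite" and g :: "real^'d \<Rightarrow> real"
  assumes der: "GDERIV g x :> G" and sc: "strongly_convex_block blk i m g"
  shows "g x + (y - x) \<bullet> G + m / 2 * (norm (block_proj blk i (y - x)))\<^sup>2 \<le> g y"
proof -
  let ?P = "block_proj blk i"
  define h where "h z = g z - m / 2 * (?P z \<bullet> ?P z)" for z
  have cvx: "convex_on UNIV h"
    using sc unfolding strongly_convex_block_def h_def by (simp add: power2_norm_eq_inner)
  have "(h has_derivative (\<lambda>v. v \<bullet> G - m / 2 * (?P x \<bullet> ?P v + ?P v \<bullet> ?P x))) (at x)"
    unfolding h_def using der linear_imp_has_derivative[OF linear_block_proj]
    unfolding gderiv_def by (auto intro!: derivative_eq_intros)
  moreover have "?P x \<bullet> ?P v = v \<bullet> ?P x" for v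
    using inner_block_proj[of blk i x v] by (simp add: inner_commute)
  ultimately have "(h has_derivative (\<lambda>v. v \<bullet> (G - m *\<^sub>R ?P x))) (at x)"
    by (simp add: inner_commute inner_diff_right)
  then have "h x + (y - x) \<bullet> (G - m *\<^sub>R ?P x) \<le> h y"
    by (rule convex_on_gradient_ineq[OF cvx])
  then have "g x + (y - x) \<bullet> G
      + m / 2 * (?P y \<bullet> ?P y - ?P x \<bullet> ?P x - 2 * ((y - x) \<bullet> ?P x)) \<le> g y"
    unfolding h_def by (simp add: inner_diff_right algebra_simps)
  moreover have "?P y \<bullet> ?P y - ?P x \<bullet> ?P x - 2 * ((y - x) \<bullet> ?P x) = ?P (y - x) \<bullet> ?P (y - x)"
  proof -
    have "?P y = ?P x + ?P (y - x)"
      using linear_diff[OF linear_block_proj, of blk i y x] by simp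
    moreover have "(y - x) \<bullet> ?P x = ?P (y - x) \<bullet> ?P x"
      using inner_block_proj[of blk i x "y - x"] by (simp add: inner_commute)
    ultimately show ?thesis
      by (simp add: inner_add_left inner_add_right inner_commute)
  qed
  ultimately show ?thesis
    by (simp add: power2_norm_eq_inner)
qed

lemma sum_strongly_convex_gradient_ineq:
  fixes blk :: "'d::finite \<Rightarrow> 'n::finite" and f :: "'n \<Rightarrow> real^'d \<Rightarrow> real"
  assumes der: "\<And>i. GDERIV (f i) x :> gradf i"
    and sc: "\<And>i. strongly_convex_block blk i (mu i) (f i)" and mu_ge: "\<And>i. m \<le> mu i"
  shows "(\<Sum>i\<in>UNIV. f i x) + (y - x) \<bullet> (\<Sum>i\<in>UNIV. gradf i) + m / 2 * (norm (y - x))\<^sup>2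
    \<le> (\<Sum>i\<in>UNIV. f i y)"
proof -
  have "m / 2 * (norm (y - x))\<^sup>2 = m / 2 * (\<Sum>i\<in>UNIV. (norm (block_proj blk i (y - x)))\<^sup>2)"
    by (simp only: sum_norm_block_proj)
  also have "\<dots> = (\<Sum>i\<in>UNIV. m / 2 * (norm (block_proj blk i (y - x)))\<^sup>2)"
    by (rule sum_distrib_left)
  also have "\<dots> \<le> (\<Sum>i\<in>UNIV. mu i / 2 * (norm (block_proj blk i (y - x)))\<^sup>2)"
    using mu_ge by (intro sum_mono mult_right_mono) auto
  finally have "(\<Sum>i\<in>UNIV. f i x) + (y - x) \<bullet> (\<Sum>i\<in>UNIV. gradf i) + m / 2 * (norm (y - x))\<^sup>2
      \<le> (\<Sum>i\<in>UNIV. f i x + (y - x) \<bullet> gradf i + mu i / 2 * (norm (block_proj blk i (y - x)))\<^sup>2)"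
    by (simp add: sum.distrib inner_sum_right)
  also have "\<dots> \<le> (\<Sum>i\<in>UNIV. f i y)"
    using strongly_convex_block_gradient_ineq[OF der sc] by (intro sum_mono) auto
  finally show ?thesis .
qed

lemma gderiv_sum:
  assumes "\<And>i. i \<in> I \<Longrightarrow> GDERIV (f i) x :> g i"
  shows "GDERIV (\<lambda>y. \<Sum>i\<in>I. f i y) x :> (\<Sum>i\<in>I. g i)"
  using has_derivative_sum[of I f "\<lambda>i h. h \<bullet> g i" "at x"] assms
  by (simp add: gderiv_def inner_sum_right)

lemma gradient_orthogonal_kernel_at_min:
  fixes F :: "real^'d::finite \<Rightarrow> real" and A :: "real^'d^'p::finite"
  assumes der: "GDERIV F xs :> G" and feas: "A *v xs = b"
    and opt: "\<forall>w. A *v w = b \<longrightarrow> F xs \<le> F w" and ker: "A *v h = 0"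
  shows "h \<bullet> G = 0"
proof -
  define \<phi> where "\<phi> s = F (xs + s *\<^sub>R h)" for s :: real
  have "((\<lambda>s::real. xs + s *\<^sub>R h) has_derivative (\<lambda>s. s *\<^sub>R h)) (at 0)"
    by (auto intro!: derivative_eq_intros)
  from has_derivative_compose[OF this, of F "\<lambda>v. v \<bullet> G"] der
  have "(\<phi> has_derivative (\<lambda>s. (s *\<^sub>R h) \<bullet> G)) (at 0)"
    unfolding \<phi>_def gderiv_def by (simp add: o_def)
  then have "DERIV \<phi> 0 :> h \<bullet> G"
    unfolding has_field_derivative_def by (simp add: mult.commute[of _ "h \<bullet> G"])
  moreover have "\<forall>s. \<bar>0 - s\<bar> < 1 \<longrightarrow> \<phi> 0 \<le> \<phi> s"
    using opt feas ker by (simp add: \<phi>_def matrix_vector_right_distrib matrix_vector_mult_scaleR)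
  ultimately show ?thesis
    by (rule DERIV_local_min[OF _ zero_less_one])
qed

lemma lagrange_multiplier_exists:
  fixes F :: "real^'d::finite \<Rightarrow> real" and A :: "real^'d^'p::finite"
  assumes der: "GDERIV F xs :> G" and feas: "A *v xs = b"
    and opt: "\<forall>w. A *v w = b \<longrightarrow> F xs \<le> F w"
  obtains c where "transpose A *v c = - G"
proof -
  let ?R = "range ((*v) (transpose A))"
  obtain y r where y: "y \<in> span ?R" and r: "\<And>w. w \<in> span ?R \<Longrightarrow> orthogonal r w"
    and G: "G = y + r"
    using orthogonal_subspace_decomp_exists by blast
  have "span ?R = ?R"
    using span_eq_iff linear_subspace_image[OF matrix_vector_mul_linear subspace_UNIV] by blast
  then obtain c where yc: "y = transpose A *v c"
    using y by blast
  have r_orth: "r \<bullet> (transpose A *v w) = 0" for w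
    using r[of "transpose A *v w"] by (simp add: span_base orthogonal_def)
  have "(A *v r) \<bullet> (A *v r) = 0"
    using r_orth[of "A *v r"] by (metis dot_lmul_matrix inner_commute transpose_matrix_vector)
  then have "r \<bullet> G = 0"
    by (intro gradient_orthogonal_kernel_at_min[OF der feas opt]) simp
  then have "r = 0"
    using G r_orth[of c] yc by (simp add: inner_add_right)
  then have "transpose A *v (- c) = - G"
    using G yc linear_neg[OF matrix_vector_mul_linear, of "transpose A" c] by simp
  then show ?thesis
    by (rule that)
qed

section \<open>The IDEA dynamics\<close>

lemma norm_triple_le_exp:
  fixes u :: "'a::real_normed_vector" and v :: "'b::real_normed_vector" and w :: "'c::real_normed_vector"
  assumes "(norm u)\<^sup>2 + (norm v)\<^sup>2 + (norm w)\<^sup>2 \<le> C * exp (- c * t)"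
  shows "norm (u, v, w) \<le> sqrt C * exp (- (c / 2) * t)"
proof -
  have "norm (u, v, w) = sqrt ((norm u)\<^sup>2 + (norm v)\<^sup>2 + (norm w)\<^sup>2)"
    by (simp add: norm_Pair add.assoc)
  also have "\<dots> \<le> sqrt (C * exp (- c * t))"
    using assms by (rule real_sqrt_le_mono)
  also have "\<dots> = sqrt C * exp (- (c / 2) * t)"
  proof -
    have "exp (- c * t) = (exp (- (c / 2) * t))\<^sup>2"
      by (simp add: power2_eq_square exp_add[symmetric])
    then show ?thesis
      by (simp add: real_sqrt_mult)
  qed
  finally show ?thesis .
qed

locale idea_dynamics =
  fixes blk :: "'d::finite \<Rightarrow> 'n::finite"
    and f :: "'n \<Rightarrow> real^'d \<Rightarrow> real" and gradf :: "'n \<Rightarrow> real^'d \<Rightarrow> real^'d"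
    and A :: "real^'d^'p::finite" and b :: "real^'p" and bb :: "real^'p^'n"
    and a :: "'n \<Rightarrow> 'n \<Rightarrow> real" and mu l :: "'n \<Rightarrow> real" and \<alpha> \<beta> :: real
    and x :: "real \<Rightarrow> real^'d" and lam z :: "real \<Rightarrow> real^'p^'n"
  assumes grad: "\<forall>i y. GDERIV (f i) y :> gradf i y"
    and strongly_convex: "\<forall>i. mu i > 0 \<and> strongly_convex_block blk i (mu i) (f i)"
    and smooth: "\<forall>i y w. norm (gradf i y - gradf i w) \<le> l i * norm (y - w)"
    and undirected: "undirected_graph a" and connected: "graph_connected a"
    and full_row_rank: "rank A = CARD('p)" and b_split: "(\<Sum>i\<in>UNIV. bb$i) = b"
    and alpha_pos: "0 < \<alpha>" and beta_pos: "0 < \<beta>"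
    and z0: "(\<Sum>i\<in>UNIV. z 0 $ i) = 0"
    and ode_x: "\<forall>t\<ge>0. (x has_vector_derivative
        (- \<alpha> *\<^sub>R ((\<Sum>i\<in>UNIV. gradf i (x t)) + bigAT A blk (lam t))
         - bigAT A blk (bigA A blk (x t) - bb - z t))) (at t within {0..})"
    and ode_lam: "\<forall>t\<ge>0. (lam has_vector_derivative
        (bigA A blk (x t) - bb - z t - \<beta> *\<^sub>R lapl a (lam t))) (at t within {0..})"
    and ode_z: "\<forall>t\<ge>0. (z has_vector_derivative
        ((\<alpha> * \<beta>) *\<^sub>R lapl a (lam t))) (at t within {0..})"
begin

definition grad_sum :: "real^'d \<Rightarrow> real^'d" where
  "grad_sum y = (\<Sum>i\<in>UNIV. gradf i y)"

lemma
  shows a_symmetric: "a i j = a j i" and a_nonneg: "0 \<le> a i j"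
  using undirected by (auto simp: undirected_graph_def)

lemma Min_mu_pos: "0 < Min (range mu)"
  using strongly_convex Min_in[of "range mu"] by auto

lemma gderiv_objective: "GDERIV (\<lambda>y. \<Sum>i\<in>UNIV. f i y) u :> grad_sum u"
  unfolding grad_sum_def using grad by (intro gderiv_sum) auto

lemma objective_gradient_ineq:
  "(\<Sum>i\<in>UNIV. f i u) + (w - u) \<bullet> grad_sum u + Min (range mu) / 2 * (norm (w - u))\<^sup>2
    \<le> (\<Sum>i\<in>UNIV. f i w)"
  unfolding grad_sum_def using grad strongly_convex
  by (intro sum_strongly_convex_gradient_ineq[where blk = blk and mu = mu]) auto

lemma grad_sum_strongly_monotone:
  "Min (range mu) * (norm (u - w))\<^sup>2 \<le> (u - w) \<bullet> (grad_sum u - grad_sum w)"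
  using objective_gradient_ineq[of u w] objective_gradient_ineq[of w u]
  by (simp add: norm_minus_commute inner_diff_left inner_diff_right algebra_simps)

lemma grad_sum_lipschitz:
  "norm (grad_sum u - grad_sum w) \<le> (\<Sum>i\<in>UNIV. \<bar>l i\<bar>) * norm (u - w)"
proof -
  have "norm (grad_sum u - grad_sum w) \<le> (\<Sum>i\<in>UNIV. norm (gradf i u - gradf i w))"
    unfolding grad_sum_def sum_subtractf[symmetric] by (rule norm_sum)
  also have "\<dots> \<le> (\<Sum>i\<in>UNIV. \<bar>l i\<bar> * norm (u - w))"
    using smooth by (intro sum_mono) (meson abs_ge_self mult_right_mono norm_ge_zero order_trans)
  finally show ?thesis
    by (simp add: sum_distrib_right)
qed

lemma optimum_unique:
  assumes "A *v u = b" "\<forall>w. A *v w = b \<longrightarrow> (\<Sum>i\<in>UNIV. f i u) \<le> (\<Sum>i\<in>UNIV. f i w)"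
    and "A *v v = b" "\<forall>w. A *v w = b \<longrightarrow> (\<Sum>i\<in>UNIV. f i v) \<le> (\<Sum>i\<in>UNIV. f i w)"
  shows "v = u"
proof -
  have "A *v (v - u) = 0"
    using assms by (simp add: matrix_vector_mult_diff_distrib)
  then have "(v - u) \<bullet> grad_sum u = 0"
    by (rule gradient_orthogonal_kernel_at_min[OF gderiv_objective assms(1,2)])
  then have "Min (range mu) / 2 * (norm (v - u))\<^sup>2 \<le> 0"
    using objective_gradient_ineq[of u v] assms by force
  then show ?thesis
    using Min_mu_pos by (simp add: mult_le_0_iff)
qed

lemma sum_z_eq_0:
  assumes "0 \<le> t"
  shows "(\<Sum>i\<in>UNIV. z t $ i) = 0"
proof -
  have "linear (\<lambda>v::real^'p^'n. \<Sum>i\<in>UNIV. v$i)"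
    by (rule linearI) (simp_all add: sum.distrib scaleR_sum_right)
  then have sum_linear: "bounded_linear (\<lambda>v::real^'p^'n. \<Sum>i\<in>UNIV. v$i)"
    by (simp add: linear_conv_bounded_linear)
  have "((\<lambda>s. \<Sum>i\<in>UNIV. z s $ i) has_derivative (\<lambda>h. 0)) (at s within {0..})" if "s \<in> {0..}" for s
  proof -
    have "(z has_vector_derivative (\<alpha> * \<beta>) *\<^sub>R lapl a (lam s)) (at s within {0..})"
      using ode_z that by simp
    then have "((\<lambda>s. \<Sum>i\<in>UNIV. z s $ i) has_vector_derivative
        (\<Sum>i\<in>UNIV. ((\<alpha> * \<beta>) *\<^sub>R lapl a (lam s)) $ i)) (at s within {0..})"
      by (rule bounded_linear.has_vector_derivative[OF sum_linear])
    moreover have "(\<Sum>i\<in>UNIV. ((\<alpha> * \<beta>) *\<^sub>R lapl a (lam s)) $ i) = 0"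
      using sum_lapl[where a = a and v = "lam s", OF a_symmetric]
      by (simp add: scaleR_sum_right[symmetric])
    ultimately show ?thesis
      by (simp add: has_vector_derivative_def)
  qed
  then have "\<exists>C. \<forall>s\<in>{0..}. (\<Sum>i\<in>UNIV. z s $ i) = C"
    by (intro has_derivative_zero_constant) (auto simp: convex_real_interval)
  then obtain C where "\<forall>s\<in>{0..}. (\<Sum>i\<in>UNIV. z s $ i) = C"
    by blast
  then show ?thesis
    using z0 assms by force
qed

lemma optimal_multiplier_exists:
  assumes "A *v xs = b" "\<forall>w. A *v w = b \<longrightarrow> (\<Sum>i\<in>UNIV. f i xs) \<le> (\<Sum>i\<in>UNIV. f i w)"
  obtains ls where "bigAT A blk ls = - grad_sum xs" "lapl a ls = 0"
proof -
  obtain c where "transpose A *v c = - grad_sum xs"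
    using lagrange_multiplier_exists[OF gderiv_objective assms] .
  then show ?thesis
    using that[of "\<chi> i. c"] by (simp add: bigAT_const lapl_const)
qed

lemma x_error_has_derivative:
  assumes "bigAT A blk ls = - grad_sum xs" and "0 \<le> t"
  shows "((\<lambda>t. x t - xs) has_vector_derivative
      - \<alpha> *\<^sub>R ((grad_sum (x t) - grad_sum xs) + bigAT A blk (lam t - ls))
      - bigAT A blk (bigA A blk (x t - xs) - (z t - (bigA A blk xs - bb)))) (at t within {0..})"
proof -
  have "- \<alpha> *\<^sub>R ((\<Sum>i\<in>UNIV. gradf i (x t)) + bigAT A blk (lam t))
      - bigAT A blk (bigA A blk (x t) - bb - z t)
    = - \<alpha> *\<^sub>R ((grad_sum (x t) - grad_sum xs) + bigAT A blk (lam t - ls))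
      - bigAT A blk (bigA A blk (x t - xs) - (z t - (bigA A blk xs - bb)))"
    using assms(1)
    by (simp add: linear_diff[OF linear_bigA] linear_diff[OF linear_bigAT] grad_sum_def algebra_simps)
  moreover have "(x has_vector_derivative - \<alpha> *\<^sub>R ((\<Sum>i\<in>UNIV. gradf i (x t)) + bigAT A blk (lam t))
      - bigAT A blk (bigA A blk (x t) - bb - z t)) (at t within {0..})"
    using ode_x assms(2) by blast
  ultimately show ?thesis
    by (simp only: has_vector_derivative_diff_const)
qed

lemma lam_error_has_derivative:
  assumes "lapl a ls = 0" and "0 \<le> t"
  shows "((\<lambda>t. lam t - ls) has_vector_derivative
      bigA A blk (x t - xs) - (z t - (bigA A blk xs - bb)) - \<beta> *\<^sub>R lapl a (lam t - ls))
      (at t within {0..})"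
proof -
  have "bigA A blk (x t) - bb - z t - \<beta> *\<^sub>R lapl a (lam t)
    = bigA A blk (x t - xs) - (z t - (bigA A blk xs - bb)) - \<beta> *\<^sub>R lapl a (lam t - ls)"
    using assms(1) by (simp add: linear_diff[OF linear_bigA] linear_diff[OF linear_lapl] algebra_simps)
  moreover have "(lam has_vector_derivative bigA A blk (x t) - bb - z t - \<beta> *\<^sub>R lapl a (lam t))
      (at t within {0..})"
    using ode_lam assms(2) by blast
  ultimately show ?thesis
    by (simp only: has_vector_derivative_diff_const)
qed

lemma z_error_has_derivative:
  assumes "lapl a ls = 0" and "0 \<le> t"
  shows "((\<lambda>t. z t - zs) has_vector_derivative (\<alpha> * \<beta>) *\<^sub>R lapl a (lam t - ls)) (at t within {0..})"
  using ode_z assms by (simp add: has_vector_derivative_diff_const linear_diff[OF linear_lapl])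

lemma error_system:
  assumes eq: "bigAT A blk ls = - grad_sum xs" "lapl a ls = 0" "A *v xs = b"
    and K: "linear K" "\<And>u w. K u \<bullet> w = u \<bullet> K w" "\<And>w. 0 \<le> K w \<bullet> w"
      "\<And>v. (\<Sum>i\<in>UNIV. v$i) = 0 \<Longrightarrow> lapl a (K v) = v"
    and \<kappa>: "0 < \<kappa>" "\<And>w. \<kappa> * (norm w)\<^sup>2 \<le> (norm (bigAT A blk w))\<^sup>2 + w \<bullet> lapl a w"
    and sB: "0 < sB" "\<And>u. norm (bigA A blk u) \<le> sB * norm u"
  shows "idea_error_system (bigA A blk) (bigAT A blk) (lapl a) K \<alpha> \<beta> (Min (range mu))
    (\<Sum>i\<in>UNIV. \<bar>l i\<bar>) \<kappa> sB (\<lambda>t. x t - xs) (\<lambda>t. grad_sum (x t) - grad_sum xs)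
    (\<lambda>t. lam t - ls) (\<lambda>t. z t - (bigA A blk xs - bb))"
proof (rule idea_error_system.intro)
  show "linear (bigA A blk)" "linear (lapl a)" "linear K"
    by (fact linear_bigA linear_lapl K(1))+
  show "bigA A blk u \<bullet> w = u \<bullet> bigAT A blk w" for u w
    by (rule inner_bigA)
  show "lapl a u \<bullet> w = u \<bullet> lapl a w" for u w :: "real^'p^'n"
    by (rule lapl_inner_commute[where a = a, OF a_symmetric])
  show "0 \<le> w \<bullet> lapl a w" for w :: "real^'p^'n"
    by (simp add: inner_lapl_self[where a = a, OF a_symmetric a_nonneg])
  show "0 \<le> (\<Sum>i\<in>UNIV. \<bar>l i\<bar>)"
    by (simp add: sum_nonneg)
  show "lapl a (K (z t - (bigA A blk xs - bb))) = z t - (bigA A blk xs - bb)" if "0 \<le> t" for t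
    using sum_z_eq_0[OF that] sum_bigA[of A blk xs] eq(3) b_split
    by (intro K(4)) (simp add: sum_subtractf)
  show "Min (range mu) * (norm (x t - xs))\<^sup>2 \<le> (x t - xs) \<bullet> (grad_sum (x t) - grad_sum xs)" for t
    by (rule grad_sum_strongly_monotone)
  show "norm (grad_sum (x t) - grad_sum xs) \<le> (\<Sum>i\<in>UNIV. \<bar>l i\<bar>) * norm (x t - xs)" for t
    by (rule grad_sum_lipschitz)
qed (use K \<kappa> sB alpha_pos beta_pos Min_mu_pos
      x_error_has_derivative[OF eq(1)] lam_error_has_derivative[OF eq(2)]
      z_error_has_derivative[OF eq(2)] in auto)

lemma converges_to_equilibrium:
  assumes "bigAT A blk ls = - grad_sum xs" "lapl a ls = 0" "A *v xs = b"
  obtains C c where "0 < C" "0 < c"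
    "\<forall>t\<ge>0. norm ((x t, lam t, z t) - (xs, ls, bigA A blk xs - bb)) \<le> C * exp (- c * t)"
proof -
  obtain K :: "real^'p^'n \<Rightarrow> real^'p^'n" where K: "linear K" "\<And>u w. K u \<bullet> w = u \<bullet> K w"
    "\<And>w. 0 \<le> K w \<bullet> w" "\<And>v. (\<Sum>i\<in>UNIV. v$i) = 0 \<Longrightarrow> lapl a (K v) = v"
    using lapl_pseudo_inverse[where a = a, OF a_symmetric a_nonneg connected] by blast
  obtain \<kappa> where \<kappa>: "0 < \<kappa>" "\<And>w. \<kappa> * (norm w)\<^sup>2 \<le> (norm (bigAT A blk w))\<^sup>2 + w \<bullet> lapl a w"
    using bigAT_lapl_coercive[where a = a and blk = blk, OF a_symmetric a_nonneg connected full_row_rank]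
    by blast
  obtain sB where sB: "0 < sB" "\<And>u. norm (bigA A blk u) \<le> sB * norm u"
    using linear_bounded_pos[OF linear_bigA] by (metis mult.commute)
  interpret error: idea_error_system "bigA A blk" "bigAT A blk" "lapl a" K \<alpha> \<beta> "Min (range mu)"
    "\<Sum>i\<in>UNIV. \<bar>l i\<bar>" \<kappa> sB "\<lambda>t. x t - xs" "\<lambda>t. grad_sum (x t) - grad_sum xs"
    "\<lambda>t. lam t - ls" "\<lambda>t. z t - (bigA A blk xs - bb)"
    by (rule error_system[OF assms K \<kappa> sB])
  obtain C c where "0 < C" "0 < c" and decay: "\<And>t. 0 \<le> t \<Longrightarrow> error.error_sq t \<le> C * exp (- c * t)"
    using error.error_sq_exp_decay by blast
  show ?thesis
  proof
    show "0 < sqrt C" "0 < c / 2"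
      using \<open>0 < C\<close> \<open>0 < c\<close> by simp_all
    show "\<forall>t\<ge>0. norm ((x t, lam t, z t) - (xs, ls, bigA A blk xs - bb)) \<le> sqrt C * exp (- (c / 2) * t)"
    proof (intro allI impI)
      fix t :: real
      assume "0 \<le> t"
      have "norm (x t - xs, lam t - ls, z t - (bigA A blk xs - bb)) \<le> sqrt C * exp (- (c / 2) * t)"
        using decay[OF \<open>0 \<le> t\<close>] unfolding error.error_sq_def by (rule norm_triple_le_exp)
      then show "norm ((x t, lam t, z t) - (xs, ls, bigA A blk xs - bb)) \<le> sqrt C * exp (- (c / 2) * t)"
        by simp
    qed
  qed
qed

end

theorem theorem2:
  fixes blk :: "'d::finite \<Rightarrow> 'n::finite"
    and f :: "'n \<Rightarrow> real^'d \<Rightarrow> real"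
    and gradf :: "'n \<Rightarrow> real^'d \<Rightarrow> real^'d"
    and A :: "real^'d^'p::finite"
    and b :: "real^'p"
    and bb :: "real^'p^'n"
    and a :: "'n \<Rightarrow> 'n \<Rightarrow> real"
    and mu l :: "'n \<Rightarrow> real"
    and \<alpha> \<beta> \<phi> :: real
    and x :: "real \<Rightarrow> real^'d"
    and lam z :: "real \<Rightarrow> real^'p^'n"
  assumes blocks_nonempty: "\<forall>i. \<exists>k. blk k = i"
    and f_block: "\<forall>i. depends_only_on_block blk i (f i)"
    and grad: "\<forall>i y. GDERIV (f i) y :> gradf i y"
    and strongly_convex: "\<forall>i. mu i > 0 \<and> strongly_convex_block blk i (mu i) (f i)"
    and smooth: "\<forall>i y w. norm (gradf i y - gradf i w) \<le> l i * norm (y - w)"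
    and slater: "\<exists>y. A *v y = b"
    and has_opt: "\<exists>y. A *v y = b \<and> (\<forall>w. A *v w = b \<longrightarrow> (\<Sum>i\<in>UNIV. f i y) \<le> (\<Sum>i\<in>UNIV. f i w))"
    and undirected: "undirected_graph a"
    and connected: "graph_connected a"
    and full_row_rank: "rank A = CARD('p)"
    and b_split: "(\<Sum>i\<in>UNIV. bb$i) = b"
    and beta_pos: "\<beta> > 0"
    and phi_pos: "\<phi> > 0"
    and phi_cond: "\<phi> > max (Max (range l) / 2 - 1) (2 * (sigma_max A blk)\<^sup>2)"
    and alpha_cond: "\<alpha> > max 1 ((\<phi> * (sigma_max A blk)\<^sup>2 / Min (range mu) + Max (range l) / 2)
                                 / (\<phi> + 1 - Max (range l) / 2))"
    and z0: "(\<Sum>i\<in>UNIV. z 0 $ i) = 0"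
    and ode_x: "\<forall>t\<ge>0. (x has_vector_derivative
        (- \<alpha> *\<^sub>R ((\<Sum>i\<in>UNIV. gradf i (x t)) + bigAT A blk (lam t))
         - bigAT A blk (bigA A blk (x t) - bb - z t))) (at t within {0..})"
    and ode_lam: "\<forall>t\<ge>0. (lam has_vector_derivative
        (bigA A blk (x t) - bb - z t - \<beta> *\<^sub>R lapl a (lam t))) (at t within {0..})"
    and ode_z: "\<forall>t\<ge>0. (z has_vector_derivative
        ((\<alpha> * \<beta>) *\<^sub>R lapl a (lam t))) (at t within {0..})"
  shows "\<exists>xs ls zs C c.
      A *v xs = b
    \<and> (\<forall>w. A *v w = b \<longrightarrow> (\<Sum>i\<in>UNIV. f i xs) \<le> (\<Sum>i\<in>UNIV. f i w))
    \<and> (\<forall>y. A *v y = b \<and> (\<forall>w. A *v w = b \<longrightarrow> (\<Sum>i\<in>UNIV. f i y) \<le> (\<Sum>i\<in>UNIV. f i w)) \<longrightarrow> y = xs)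
    \<and> C > 0 \<and> c > 0
    \<and> (\<forall>t\<ge>0. norm ((x t, lam t, z t) - (xs, ls, zs)) \<le> C * exp (- c * t))"
proof -
  interpret idea_dynamics blk f gradf A b bb a mu l \<alpha> \<beta> x lam z
    using grad strongly_convex smooth undirected connected full_row_rank b_split beta_pos
      alpha_cond z0 ode_x ode_lam ode_z
    by unfold_locales auto
  obtain xs where feasible: "A *v xs = b"
    and optimal: "\<forall>w. A *v w = b \<longrightarrow> (\<Sum>i\<in>UNIV. f i xs) \<le> (\<Sum>i\<in>UNIV. f i w)"
    using has_opt by blast
  obtain ls where "bigAT A blk ls = - grad_sum xs" "lapl a ls = 0"
    using optimal_multiplier_exists[OF feasible optimal] .
  then obtain C c where "0 < C" "0 < c"
    "\<forall>t\<ge>0. norm ((x t, lam t, z t) - (xs, ls, bigA A blk xs - bb)) \<le> C * exp (- c * t)"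
    using converges_to_equilibrium feasible by blast
  then show ?thesis
    using feasible optimal optimum_unique[OF feasible optimal] by blast
qed
end
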